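(* Let $D$ be a subsemigroup of $(\mathbb N_0,+)$ such that $\mathbb N\setminus D$ is infinite. Then every set $\mathcal G$ of two-colored partitions with $\langle\mathcal G\rangle=\mathcal I_D$ is infinite.
   Context: $\mathbb N=\{1,2,\dots\}$, $\mathbb N_0=\mathbb N\cup\{0\}$. A (two-colored) partition $p$ consists of two finite totally ordered sets $U$ (upper row, left to right) and $L$ (lower row), a decomposition of $U\sqcup L$ (the points) into non-empty pairwise disjoint blocks, and a coloring of each point by $\circ$ or $\bullet$. A pair partition has only two-point blocks. Operations: tensor product $p\otimes p'$ (append the rows of $p'$ to the right of those of $p$); involution $p^*$ (exchange the rows); composition $pp'$, defined when the lower row of $p'$ and the upper row of $p$ agree in length and coloring: put $p'$ on top of $p$, identify the lower row of $p'$ with the upper row of $p$, keep the upper row of $p'$ and lower row of $p$, and let two remaining points be in the same block iff connected through blocks of $p,p'$ via the middle points (components entirely in the middle are discarded). A category of partitions is a set of partitions closed under these three operations and containing the partitions with one upper and one lower point of equal color $c\in\{\circ,\bullet\}$ forming a block, and the partitions with empty upper row and lower row $\circ\bullet$ resp. $\bullet\circ$ forming a block. $\langle\mathcal G\rangle$ is the smallest category containing $\mathcal G$. On the points of $p$ consider the cyclic order obtained by traversing the lower row left to right and then the upper row right to left. $]\alpha,\beta[$: points strictly after $\alpha$ and before $\beta$ in this cyclic order; $]\alpha,\beta]:=]\alpha,\beta[\cup\{\beta\}$ for $\alpha\ne\beta$, $]\alpha,\alpha]:=\emptyset$. Normalized color: the color for lower points, the opposite color for upper points. $\sigma_p(S)$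 = #normalized-$\circ$ points of $S$ $-$ #normalized-$\bullet$ points of $S$. Distinct blocks $B,B'$ cross if there are $\alpha,\beta\in B,\gamma,\delta\in B'$ in cyclic order $\alpha,\gamma,\beta,\delta$. $\mathcal P^{\circ\bullet}_{2,\mathrm{nb}}$: pair partitions each block of which has one point of each normalized color. $\mathcal S_0$: those $p\in\mathcal P^{\circ\bullet}_{2,\mathrm{nb}}$ with $\sigma_p(]\alpha,\beta[)=0$ for all blocks $\{\alpha,\beta\}$. For $p\in\mathcal S_0$: $\delta_p(\alpha,\beta)=\sigma_p(]\alpha,\beta[)$ for different normalized colors, $\sigma_p(]\alpha,\beta])$ for equal ones; $d_p(B,B')=|\delta_p(\alpha,\alpha')|$ for any $\alpha\in B,\alpha'\in B'$ (well defined). A subsemigroup of $(\mathbb N_0,+)$ is a possibly empty subset closed under addition. $\mathcal I_D$: all $p\in\mathcal S_0$ with $d_p(B,B')\notin D$ for all crossing blocks $B,B'$. *)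

theory Defs
  imports Main "HOL-Library.Disjoint_Sets"
begin

datatype color = White | Black   (* White = \<circ>, Black = \<bullet> *)

fun flipc :: "color \<Rightarrow> color" where
  "flipc White = Black" | "flipc Black = White"

text \<open>Points: U i is the i-th upper point, L j the j-th lower point (0-based, left to right).\<close>
datatype pt = U nat | L nat

datatype part = Part (upc: "color list") (loc: "color list") (blks: "pt set set")

definition points :: "part \<Rightarrow> pt set" where
  "points p = {U i | i. i < length (upc p)} \<union> {L j | j. j < length (loc p)}"

definition wf_part :: "part \<Rightarrow> bool" where
  "wf_part p \<longleftrightarrow> partition_on (points p) (blks p)"

fun shift_pt :: "nat \<Rightarrow> nat \<Rightarrow> pt \<Rightarrow> pt" where
  "shift_pt a b (U i) = U (i + a)" | "shift_pt a b (L j) = L (j + b)"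

definition tensor :: "part \<Rightarrow> part \<Rightarrow> part" where
  "tensor p q = Part (upc p @ upc q) (loc p @ loc q)
     (blks p \<union> (image (shift_pt (length (upc p)) (length (loc p)))) ` blks q)"

fun swap_pt :: "pt \<Rightarrow> pt" where
  "swap_pt (U i) = L i" | "swap_pt (L j) = U j"

definition invol :: "part \<Rightarrow> part" where
  "invol p = Part (loc p) (upc p) (image swap_pt ` blks p)"

text \<open>Composition comp p q = pq: q is put on top of p (requires loc q = upc p).
  Points of q are tagged Inl, points of p are tagged Inr.\<close>
definition comp_edges :: "part \<Rightarrow> part \<Rightarrow> ((pt + pt) \<times> (pt + pt)) set" where
  "comp_edges p q =
     {(Inl x, Inl y) | x y. \<exists>B\<in>blks q. x \<in> B \<and> y \<in> B}
   \<union> {(Inr x, Inr y) | x y. \<exists>B\<in>blks p. x \<in> B \<and> y \<in> B}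
   \<union> {(Inl (L i), Inr (U i)) | i. i < length (upc p)}
   \<union> {(Inr (U i), Inl (L i)) | i. i < length (upc p)}"

fun outer :: "pt \<Rightarrow> pt + pt" where
  "outer (U i) = Inl (U i)" | "outer (L j) = Inr (L j)"

definition comp :: "part \<Rightarrow> part \<Rightarrow> part" where
  "comp p q =
     (let R = points (Part (upc q) (loc p) {}) in
      Part (upc q) (loc p)
        {{y \<in> R. (outer x, outer y) \<in> (comp_edges p q)\<^sup>*} | x. x \<in> R})"

definition idp :: "color \<Rightarrow> part" where
  "idp c = Part [c] [c] {{U 0, L 0}}"

definition pairWB :: part where "pairWB = Part [] [White, Black] {{L 0, L 1}}"
definition pairBW :: part where "pairBW = Part [] [Black, White] {{L 0, L 1}}"

definition is_category :: "part set \<Rightarrow> bool" where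
  "is_category C \<longleftrightarrow>
     C \<subseteq> {p. wf_part p}
   \<and> (\<forall>p\<in>C. \<forall>q\<in>C. tensor p q \<in> C)
   \<and> (\<forall>p\<in>C. invol p \<in> C)
   \<and> (\<forall>p\<in>C. \<forall>q\<in>C. loc q = upc p \<longrightarrow> comp p q \<in> C)
   \<and> idp White \<in> C \<and> idp Black \<in> C \<and> pairWB \<in> C \<and> pairBW \<in> C"

definition gen_cat :: "part set \<Rightarrow> part set" where
  "gen_cat G = \<Inter>{C. is_category C \<and> G \<subseteq> C}"

definition npts :: "part \<Rightarrow> int" where
  "npts p = int (length (upc p) + length (loc p))"

text \<open>Position in the cyclic order: lower row left to right, then upper row right to left.\<close>
fun pos :: "part \<Rightarrow> pt \<Rightarrow> int" where
  "pos p (L j) = int j"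
| "pos p (U i) = int (length (loc p)) + (int (length (upc p)) - 1 - int i)"

text \<open>Open cyclic interval ]a,b[ (used for a \<noteq> b).\<close>
definition oint :: "part \<Rightarrow> pt \<Rightarrow> pt \<Rightarrow> pt set" where
  "oint p a b = {c \<in> points p. 0 < (pos p c - pos p a) mod npts p
                  \<and> (pos p c - pos p a) mod npts p < (pos p b - pos p a) mod npts p}"

definition hint :: "part \<Rightarrow> pt \<Rightarrow> pt \<Rightarrow> pt set" where
  "hint p a b = (if a = b then {} else oint p a b \<union> {b})"

fun ncol :: "part \<Rightarrow> pt \<Rightarrow> color" where
  "ncol p (L j) = loc p ! j"
| "ncol p (U i) = flipc (upc p ! i)"

definition sigma :: "part \<Rightarrow> pt set \<Rightarrow> int" where
  "sigma p S = int (card {x \<in> S. ncol p x = White}) - int (card {x \<in> S. ncol p x = Black})"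

definition crosses :: "part \<Rightarrow> pt set \<Rightarrow> pt set \<Rightarrow> bool" where
  "crosses p B B' \<longleftrightarrow> B \<noteq> B' \<and>
     (\<exists>a\<in>B. \<exists>b\<in>B. \<exists>c\<in>B'. \<exists>d\<in>B'. c \<in> oint p a b \<and> d \<in> oint p b a)"

definition P2nb :: "part set" where
  "P2nb = {p. wf_part p \<and>
     (\<forall>B\<in>blks p. \<exists>x y. B = {x, y} \<and> ncol p x = White \<and> ncol p y = Black)}"

definition S0 :: "part set" where
  "S0 = {p \<in> P2nb. \<forall>B\<in>blks p. \<forall>a\<in>B. \<forall>b\<in>B. a \<noteq> b \<longrightarrow> sigma p (oint p a b) = 0}"

definition deltap :: "part \<Rightarrow> pt \<Rightarrow> pt \<Rightarrow> int" where
  "deltap p a b = (if ncol p a \<noteq> ncol p b then sigma p (oint p a b) else sigma p (hint p a b))"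

definition dp :: "part \<Rightarrow> pt set \<Rightarrow> pt set \<Rightarrow> nat" where
  "dp p B B' = nat \<bar>deltap p (SOME a. a \<in> B) (SOME a'. a' \<in> B')\<bar>"

definition I_D :: "nat set \<Rightarrow> part set" where
  "I_D D = {p \<in> S0. \<forall>B\<in>blks p. \<forall>B'\<in>blks p. crosses p B B' \<longrightarrow> dp p B B' \<notin> D}"

end

theory Submission
  imports Defs
begin

text \<open>Read the points of a partition in cyclic order and let \<open>\<circ>\<close> and \<open>\<bullet>\<close> (normalized) be steps
  up and down of a walk. In a partition of \<open>S0\<close> both points of a block sit at the same level of this
  walk, and \<open>d_p\<close> of two blocks is the difference of their levels. For fixed \<open>M\<close>, the
  partitions of \<open>I_D\<close> whose crossing blocks differ in level by less than \<open>M\<close> form a category: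
  tensor products and the involution merely shift or mirror levels and crossings, and a crossing in
  a composition \<open>pq\<close> is traced, by a parity argument along the connected components of the stacked
  diagram, to a crossing of blocks of \<open>p\<close> or of \<open>q\<close> carrying the same two levels. A finite
  \<open>G\<close> lies in this category once \<open>M\<close> exceeds twice the size of each generator, so \<open>\<langle>G\<rangle>\<close>
  has bounded level gaps. But for every \<open>k \<notin> D\<close> there is a partition in \<open>I_D\<close> with crossing
  blocks at levels \<open>0\<close> and \<open>k\<close>: pair the points of the walk \<open>\<circ>\<^sup>K \<bullet>\<^sup>K \<circ>\<^sup>K \<bullet>\<^sup>K\<close>
  inside each hill at the levels in \<open>D \<union> {0}\<close> and across the valley at all other levels.\<close>

definition color_sign :: "color \<Rightarrow> int" where
  "color_sign c = (if c = White then 1 else -1)"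

lemma color_sign_flipc [simp]: "color_sign (flipc c) = - color_sign c"
  by (cases c) (auto simp: color_sign_def)

lemma sigma_eq_sum: "finite S \<Longrightarrow> sigma p S = (\<Sum>x\<in>S. color_sign (ncol p x))"
proof (induction S rule: finite_induct)
  case empty
  then show ?case by (simp add: sigma_def)
next
  case (insert x S)
  have "{y \<in> insert x S. ncol p y = c} =
      (if ncol p x = c then insert x {y \<in> S. ncol p y = c} else {y \<in> S. ncol p y = c})" for c
    by auto
  with insert show ?case
    by (cases "ncol p x") (auto simp: sigma_def color_sign_def)
qed

lemma points_iff:
  "x \<in> points p \<longleftrightarrow> (case x of L j \<Rightarrow> j < length (loc p) | U i \<Rightarrow> i < length (upc p))"
  by (cases x) (auto simp: points_def)

lemma finite_points [simp]: "finite (points p)"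
proof -
  have "points p \<subseteq> U ` {..<length (upc p)} \<union> L ` {..<length (loc p)}"
    by (auto simp: points_def)
  then show ?thesis
    by (rule finite_subset) auto
qed

lemma wf_part_block_subset: "wf_part p \<Longrightarrow> B \<in> blks p \<Longrightarrow> B \<subseteq> points p"
  unfolding wf_part_def using partition_onD1 by blast

lemma wf_part_blocks_disjoint:
  "wf_part p \<Longrightarrow> B \<in> blks p \<Longrightarrow> B' \<in> blks p \<Longrightarrow> B \<noteq> B' \<Longrightarrow> B \<inter> B' = {}"
  unfolding wf_part_def partition_on_def disjoint_def by blast

lemma wf_part_block_nonempty: "wf_part p \<Longrightarrow> B \<in> blks p \<Longrightarrow> \<exists>x. x \<in> B"
  unfolding wf_part_def partition_on_def by (metis ex_in_conv)

lemma wf_part_finite_blocks: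
  assumes "wf_part p"
  shows "finite (blks p)" "B \<in> blks p \<Longrightarrow> finite B"
proof -
  show "finite (blks p)"
    using assms finite_UnionD[of "blks p"] partition_onD1[of "points p" "blks p", symmetric]
    by (simp add: wf_part_def)
  show "finite B" if "B \<in> blks p"
    using finite_subset[OF wf_part_block_subset[OF assms that]] by simp
qed

lemma P2nb_wf_part: "p \<in> P2nb \<Longrightarrow> wf_part p"
  by (simp add: P2nb_def)

lemma S0_P2nb: "p \<in> S0 \<Longrightarrow> p \<in> P2nb"
  by (simp add: S0_def)

lemma I_D_S0: "p \<in> I_D D \<Longrightarrow> p \<in> S0"
  by (simp add: I_D_def)

lemma I_D_subset_S0: "I_D D \<subseteq> S0"
  using I_D_S0 by blast

lemma I_D_subset_wf_part: "I_D D \<subseteq> {p. wf_part p}"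
  using I_D_S0 S0_P2nb P2nb_wf_part by blast

lemma P2nb_block:
  assumes "p \<in> P2nb" "B \<in> blks p"
  obtains x y where "B = {x, y}" "x \<noteq> y" "ncol p x = White" "ncol p y = Black"
proof -
  obtain x y where xy: "B = {x, y}" "ncol p x = White" "ncol p y = Black"
    using assms by (auto simp: P2nb_def)
  then have "x \<noteq> y" by auto
  with xy that show thesis by blast
qed

lemma P2nb_block_other:
  assumes "p \<in> P2nb" "B \<in> blks p" "a \<in> B"
  obtains b where "B = {a, b}" "a \<noteq> b"
proof -
  from assms(1,2) obtain x y where "B = {x, y}" "x \<noteq> y" "ncol p x = White" "ncol p y = Black"
    by (rule P2nb_block)
  with assms(3) that show thesis
    by (auto simp: insert_commute)
qed

definition npoints :: "part \<Rightarrow> nat" where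
  "npoints p = length (upc p) + length (loc p)"

fun cpos :: "part \<Rightarrow> pt \<Rightarrow> nat" where
  "cpos p (L j) = j"
| "cpos p (U i) = length (loc p) + (length (upc p) - 1 - i)"

definition pt_at :: "part \<Rightarrow> nat \<Rightarrow> pt" where
  "pt_at p k = (if k < length (loc p) then L k else U (npoints p - 1 - k))"

lemma cpos_less_npoints: "x \<in> points p \<Longrightarrow> cpos p x < npoints p"
  by (cases x) (auto simp: points_iff npoints_def)

lemma pt_at_cpos [simp]: "x \<in> points p \<Longrightarrow> pt_at p (cpos p x) = x"
  by (cases x) (auto simp: points_iff pt_at_def npoints_def)

lemma cpos_pt_at [simp]: "k < npoints p \<Longrightarrow> cpos p (pt_at p k) = k"
  by (auto simp: pt_at_def npoints_def)

lemma pt_at_in_points: "k < npoints p \<Longrightarrow> pt_at p k \<in> points p"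
  by (auto simp: points_iff pt_at_def npoints_def)

lemma cpos_inject:
  "x \<in> points p \<Longrightarrow> y \<in> points p \<Longrightarrow> cpos p x = cpos p y \<longleftrightarrow> x = y"
  by (metis pt_at_cpos)

lemma bij_betw_pt_at: "bij_betw (pt_at p) {..<npoints p} (points p)"
proof (rule bij_betw_byWitness[where f' = "cpos p"])
  show "pt_at p ` {..<npoints p} \<subseteq> points p"
    using pt_at_in_points by blast
  show "cpos p ` points p \<subseteq> {..<npoints p}"
    using cpos_less_npoints by blast
qed simp_all

lemma pos_eq_cpos: "x \<in> points p \<Longrightarrow> pos p x = int (cpos p x)"
  by (cases x) (auto simp: points_iff)

definition cyc_between :: "nat \<Rightarrow> nat \<Rightarrow> nat \<Rightarrow> bool" where
  "cyc_between a b c \<longleftrightarrow> (if a < b then a < c \<and> c < b else b < a \<and> (a < c \<or> c < b))"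

lemma oint_iff:
  assumes "a \<in> points p" "b \<in> points p"
  shows "c \<in> oint p a b \<longleftrightarrow> c \<in> points p \<and> cyc_between (cpos p a) (cpos p b) (cpos p c)"
proof (cases "c \<in> points p")
  case True
  define N where "N = npoints p"
  have mod_eq: "(int y - int x) mod int N = (if x \<le> y then int y - int x else int y - int x + int N)"
    if "x < N" "y < N" for x y
  proof (cases "x \<le> y")
    case True
    then show ?thesis using that by (simp add: mod_pos_pos_trivial)
  next
    case False
    then have "(int y - int x + int N) mod int N = int y - int x + int N"
      using that by (intro mod_pos_pos_trivial) auto
    then show ?thesis using False by simp
  qed
  have "npts p = int N"
    by (simp add: N_def npts_def npoints_def)
  moreover have "cpos p a < N" "cpos p b < N" "cpos p c < N"
    using assms True cpos_less_npoints unfolding N_def by blast+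
  ultimately show ?thesis
    using assms True by (simp add: oint_def pos_eq_cpos mod_eq cyc_between_def)
qed (simp add: oint_def)

section \<open>Heights and levels\<close>

definition cyc_height :: "part \<Rightarrow> nat \<Rightarrow> int" where
  "cyc_height p k = (\<Sum>j<k. color_sign (ncol p (pt_at p j)))"

lemma cyc_height_Suc: "cyc_height p (Suc k) = cyc_height p k + color_sign (ncol p (pt_at p k))"
  by (simp add: cyc_height_def)

lemma cyc_height_diff:
  "m \<le> n \<Longrightarrow> cyc_height p n - cyc_height p m = (\<Sum>k\<in>{m..<n}. color_sign (ncol p (pt_at p k)))"
  unfolding cyc_height_def lessThan_atLeast0 by (simp add: sum_diff_nat_ivl)

lemma sigma_points_eq_cyc_height: "sigma p (points p) = cyc_height p (npoints p)"
  unfolding sigma_eq_sum[OF finite_points] cyc_height_def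
  by (rule sum.reindex_bij_betw[OF bij_betw_pt_at, symmetric])

lemma sigma_oint_eq_sum_positions:
  assumes "a \<in> points p" "b \<in> points p"
  shows "sigma p (oint p a b) =
    (\<Sum>k | k < npoints p \<and> cyc_between (cpos p a) (cpos p b) k. color_sign (ncol p (pt_at p k)))"
proof -
  define I where "I = {k. k < npoints p \<and> cyc_between (cpos p a) (cpos p b) k}"
  have "oint p a b = pt_at p ` I"
  proof (rule set_eqI)
    fix c
    have "c \<in> pt_at p ` I \<longleftrightarrow> c \<in> points p \<and> cpos p c \<in> I"
      using pt_at_in_points cpos_less_npoints by (force simp: I_def)
    then show "c \<in> oint p a b \<longleftrightarrow> c \<in> pt_at p ` I"
      using oint_iff[OF assms] cpos_less_npoints by (auto simp: I_def)
  qed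
  moreover have "inj_on (pt_at p) I"
    using bij_betw_pt_at[of p] by (auto simp: I_def bij_betw_def intro: inj_on_subset)
  moreover have "finite I"
    by (simp add: I_def)
  ultimately show ?thesis
    by (simp add: sigma_eq_sum sum.reindex flip: I_def)
qed

lemma sigma_oint_eq_cyc_height:
  assumes "a \<in> points p" "b \<in> points p" "a \<noteq> b"
  shows "sigma p (oint p a b) = cyc_height p (cpos p b) - cyc_height p (Suc (cpos p a))
           + (if cpos p b < cpos p a then cyc_height p (npoints p) else 0)"
proof -
  let ?a = "cpos p a" and ?b = "cpos p b" and ?N = "npoints p"
  let ?s = "\<lambda>k. color_sign (ncol p (pt_at p k))" and ?I = "{k. k < ?N \<and> cyc_between ?a ?b k}"
  have lt: "?a < ?N" "?b < ?N" and ne: "?a \<noteq> ?b"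
    using assms cpos_less_npoints cpos_inject by blast+
  show ?thesis
    unfolding sigma_oint_eq_sum_positions[OF assms(1,2)]
  proof (cases "?a < ?b")
    case True
    then have "?I = {Suc ?a..<?b}"
      using lt by (auto simp: cyc_between_def)
    then show "sum ?s ?I = cyc_height p ?b - cyc_height p (Suc ?a) + (if ?b < ?a then cyc_height p ?N else 0)"
      using True cyc_height_diff[of "Suc ?a" ?b p] by simp
  next
    case False
    then have "?I = {Suc ?a..<?N} \<union> {0..<?b}" and "?b < ?a"
      using lt ne by (auto simp: cyc_between_def)
    moreover have "sum ?s ({Suc ?a..<?N} \<union> {0..<?b}) = sum ?s {Suc ?a..<?N} + sum ?s {0..<?b}"
      using \<open>?b < ?a\<close> by (intro sum.union_disjoint) auto
    ultimately show "sum ?s ?I = cyc_height p ?b - cyc_height p (Suc ?a) + (if ?b < ?a then cyc_height p ?N else 0)"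
      using lt cyc_height_diff[of "Suc ?a" ?N p] cyc_height_diff[of 0 ?b p]
      by (simp add: cyc_height_def)
  qed
qed

lemma P2nb_cyc_height_closed:
  assumes "p \<in> P2nb"
  shows "cyc_height p (npoints p) = 0"
proof -
  have wf: "partition_on (points p) (blks p)"
    using assms by (simp add: P2nb_def wf_part_def)
  have fin: "finite (blks p)" "\<forall>B\<in>blks p. finite B"
    using wf_part_finite_blocks[OF P2nb_wf_part[OF assms]] by auto
  have "cyc_height p (npoints p) = (\<Sum>x\<in>points p. color_sign (ncol p x))"
    by (simp flip: sigma_points_eq_cyc_height add: sigma_eq_sum)
  also have "\<dots> = (\<Sum>x\<in>\<Union>(blks p). color_sign (ncol p x))"
    using partition_onD1[OF wf] by simp
  also have "\<dots> = (\<Sum>B\<in>blks p. \<Sum>x\<in>B. color_sign (ncol p x))"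
    using fin partition_onD2[OF wf] by (subst sum.Union_disjoint) (auto simp: disjoint_def)
  also have "\<dots> = 0"
  proof (rule sum.neutral, rule ballI)
    fix B assume "B \<in> blks p"
    with assms obtain x y where "B = {x, y}" "x \<noteq> y" "ncol p x = White" "ncol p y = Black"
      by (rule P2nb_block)
    then show "(\<Sum>x\<in>B. color_sign (ncol p x)) = 0"
      by (simp add: color_sign_def)
  qed
  finally show ?thesis .
qed

definition row_height :: "color list \<Rightarrow> nat \<Rightarrow> int" where
  "row_height cs j = (\<Sum>t<j. color_sign (cs ! t))"

definition row_level :: "color list \<Rightarrow> nat \<Rightarrow> int" where
  "row_level cs j = min (row_height cs j) (row_height cs (Suc j))"

text \<open>Each row is read left to right in its own colours. For a closed walk this gives the same
  levels as the walk along the cyclic order (\<open>level_eq_cyc_height\<close>), and it keeps levels local to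
  the rows, as tensor products and the involution need.\<close>

fun level :: "part \<Rightarrow> pt \<Rightarrow> int" where
  "level p (L j) = row_level (loc p) j"
| "level p (U i) = row_level (upc p) i"

lemma cyc_height_lower: "j \<le> length (loc p) \<Longrightarrow> cyc_height p j = row_height (loc p) j"
  by (induction j) (auto simp: cyc_height_def row_height_def pt_at_def)

lemma cyc_height_upper:
  assumes "cyc_height p (npoints p) = 0" "i \<le> length (upc p)"
  shows "cyc_height p (npoints p - i) = row_height (upc p) i"
  using assms(2)
proof (induction i)
  case 0
  then show ?case using assms(1) by (simp add: row_height_def)
next
  case (Suc i)
  let ?k = "npoints p - Suc i"
  have "Suc ?k = npoints p - i" "pt_at p ?k = U i"
    using Suc.prems by (auto simp: pt_at_def npoints_def)
  then have "cyc_height p (npoints p - i) = cyc_height p ?k - color_sign (upc p ! i)"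
    using cyc_height_Suc[of p ?k] by simp
  then show ?case
    using Suc by (simp add: row_height_def)
qed

lemma level_eq_cyc_height:
  assumes "cyc_height p (npoints p) = 0" "x \<in> points p"
  shows "level p x = min (cyc_height p (cpos p x)) (cyc_height p (Suc (cpos p x)))"
proof (cases x)
  case (L j)
  then show ?thesis
    using assms(2) by (simp add: points_iff cyc_height_lower row_level_def)
next
  case (U i)
  then have i: "i < length (upc p)"
    using assms(2) by (simp add: points_iff)
  then have "cpos p x = npoints p - Suc i" "Suc (cpos p x) = npoints p - i"
    using U by (auto simp: npoints_def)
  then show ?thesis
    using U i cyc_height_upper[OF assms(1), of i] cyc_height_upper[OF assms(1), of "Suc i"]
    by (simp add: row_level_def min.commute)
qed

lemma P2nb_rows_balanced:
  assumes "p \<in> P2nb"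
  shows "row_height (loc p) (length (loc p)) = row_height (upc p) (length (upc p))"
  using cyc_height_upper[OF P2nb_cyc_height_closed[OF assms], of "length (upc p)"]
    cyc_height_lower[of "length (loc p)" p]
  by (simp add: npoints_def)

lemma deltap_eq_level_diff:
  assumes "p \<in> P2nb" "a \<in> points p" "b \<in> points p"
  shows "deltap p a b = level p b - level p a"
proof (cases "a = b")
  case True
  then show ?thesis by (simp add: deltap_def hint_def sigma_def)
next
  case False
  let ?s = "\<lambda>x. color_sign (ncol p x)" and ?H = "cyc_height p"
  have closed: "?H (npoints p) = 0"
    using P2nb_cyc_height_closed[OF assms(1)] .
  have oint: "sigma p (oint p a b) = ?H (cpos p b) - ?H (Suc (cpos p a))"
    using sigma_oint_eq_cyc_height[OF assms(2,3) False] closed by simp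
  have step: "?H (Suc (cpos p x)) = ?H (cpos p x) + ?s x" if "x \<in> points p" for x
    using cyc_height_Suc that by simp
  have "b \<notin> oint p a b"
    using oint_iff[OF assms(2,3)] by (simp add: cyc_between_def)
  then have hint: "sigma p (hint p a b) = sigma p (oint p a b) + ?s b"
    using False finite_subset[OF _ finite_points, of "oint p a b"]
    by (simp add: hint_def sigma_eq_sum oint_def)
  show ?thesis
    unfolding deltap_def hint oint level_eq_cyc_height[OF closed assms(2)]
      level_eq_cyc_height[OF closed assms(3)] step[OF assms(2)] step[OF assms(3)]
    by (cases "ncol p a"; cases "ncol p b") (auto simp: color_sign_def)
qed

lemma S0_level_eq:
  assumes "p \<in> S0" "B \<in> blks p" "u \<in> B" "v \<in> B"
  shows "level p u = level p v"
proof -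
  have P: "p \<in> P2nb" using assms(1) by (rule S0_P2nb)
  obtain x y where xy: "B = {x, y}" "x \<noteq> y" "ncol p x = White" "ncol p y = Black"
    using P assms(2) by (rule P2nb_block)
  have pts: "x \<in> points p" "y \<in> points p"
    using xy assms(2) wf_part_block_subset[OF P2nb_wf_part[OF P]] by auto
  have "deltap p x y = 0"
    using assms(1,2) xy by (auto simp: S0_def deltap_def)
  then have "level p x = level p y"
    using deltap_eq_level_diff[OF P pts] by simp
  then show ?thesis
    using assms(3,4) xy by auto
qed

lemma S0_dp_eq_level_diff:
  assumes "p \<in> S0" "B \<in> blks p" "B' \<in> blks p" "a \<in> B" "a' \<in> B'"
  shows "dp p B B' = nat \<bar>level p a' - level p a\<bar>"
proof -
  have P: "p \<in> P2nb" using assms(1) by (rule S0_P2nb)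
  have some: "(SOME x. x \<in> B) \<in> B" "(SOME x. x \<in> B') \<in> B'"
    using assms(4,5) by (metis someI_ex)+
  then have "(SOME x. x \<in> B) \<in> points p" "(SOME x. x \<in> B') \<in> points p"
    using assms(2,3) wf_part_block_subset[OF P2nb_wf_part[OF P]] by auto
  then show ?thesis
    using deltap_eq_level_diff[OF P] S0_level_eq[OF assms(1,2) assms(4) some(1)]
      S0_level_eq[OF assms(1,3) assms(5) some(2)]
    by (simp add: dp_def)
qed

lemma row_height_bound: "\<bar>row_height cs j\<bar> \<le> int j"
proof (induction j)
  case (Suc j)
  have "\<bar>color_sign (cs ! j)\<bar> = 1" by (simp add: color_sign_def)
  then show ?case using Suc by (simp add: row_height_def)
qed (simp add: row_height_def)

lemma level_bound:
  assumes "x \<in> points p"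
  shows "\<bar>level p x\<bar> \<le> int (npoints p)"
proof (cases x)
  case (L j)
  then have "Suc j \<le> npoints p"
    using assms by (simp add: points_iff npoints_def)
  then show ?thesis
    using L row_height_bound[of "loc p" j] row_height_bound[of "loc p" "Suc j"]
    by (simp add: row_level_def)
next
  case (U i)
  then have "Suc i \<le> npoints p"
    using assms by (simp add: points_iff npoints_def)
  then show ?thesis
    using U row_height_bound[of "upc p" i] row_height_bound[of "upc p" "Suc i"]
    by (simp add: row_level_def)
qed

definition between :: "'a::linorder \<Rightarrow> 'a \<Rightarrow> 'a \<Rightarrow> bool" where
  "between a b c \<longleftrightarrow> a < c \<and> c < b \<or> b < c \<and> c < a"

lemma between_commute: "between a b c = between b a c"
  by (auto simp: between_def)

abbreviation cbetween :: "part \<Rightarrow> pt \<Rightarrow> pt \<Rightarrow> pt \<Rightarrow> bool" where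
  "cbetween p a b c \<equiv> between (cpos p a) (cpos p b) (cpos p c)"

lemma cyc_between_imp_between:
  fixes a b c d :: nat
  assumes "cyc_between a b c" "cyc_between b a d"
  shows "a \<noteq> b" "d \<noteq> a \<and> d \<noteq> b \<and> between a b c \<and> \<not> between a b d
    \<or> c \<noteq> a \<and> c \<noteq> b \<and> between a b d \<and> \<not> between a b c"
  using assms by (auto simp: cyc_between_def between_def split: if_splits)

lemma between_imp_cyc_between:
  fixes a b c d :: nat
  assumes "a \<noteq> b" "d \<noteq> a" "d \<noteq> b" "between a b c" "\<not> between a b d"
  shows "cyc_between a b c \<and> cyc_between b a d \<or> cyc_between a b d \<and> cyc_between b a c"
  using assms by (auto simp: cyc_between_def between_def split: if_splits)

lemma crosses_iff_between:
  assumes "B \<subseteq> points p" "B' \<subseteq> points p"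
  shows "crosses p B B' \<longleftrightarrow> B \<noteq> B' \<and> (\<exists>a\<in>B. \<exists>b\<in>B. \<exists>c\<in>B'. \<exists>d\<in>B'.
           a \<noteq> b \<and> d \<noteq> a \<and> d \<noteq> b \<and> cbetween p a b c \<and> \<not> cbetween p a b d)"
    (is "_ \<longleftrightarrow> _ \<and> ?between")
proof -
  have oint: "c \<in> oint p a b \<longleftrightarrow> cyc_between (cpos p a) (cpos p b) (cpos p c)"
    if "a \<in> B \<union> B'" "b \<in> B \<union> B'" "c \<in> B \<union> B'" for a b c
    using oint_iff that assms by blast
  have inj: "cpos p x = cpos p y \<longleftrightarrow> x = y" if "x \<in> B \<union> B'" "y \<in> B \<union> B'" for x y
    using that assms cpos_inject by blast
  have "(\<exists>a\<in>B. \<exists>b\<in>B. \<exists>c\<in>B'. \<exists>d\<in>B'. c \<in> oint p a b \<and> d \<in> oint p b a) \<longleftrightarrow> ?between"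
  proof
    assume "\<exists>a\<in>B. \<exists>b\<in>B. \<exists>c\<in>B'. \<exists>d\<in>B'. c \<in> oint p a b \<and> d \<in> oint p b a"
    then obtain a b c d where abcd: "a \<in> B" "b \<in> B" "c \<in> B'" "d \<in> B'"
      and "cyc_between (cpos p a) (cpos p b) (cpos p c)" "cyc_between (cpos p b) (cpos p a) (cpos p d)"
      using oint by blast
    from cyc_between_imp_between[OF this(5,6)] abcd show ?between
      by (metis (full_types))
  next
    assume ?between
    then obtain a b c d where abcd: "a \<in> B" "b \<in> B" "c \<in> B'" "d \<in> B'" "a \<noteq> b" "d \<noteq> a" "d \<noteq> b"
      and "cbetween p a b c" "\<not> cbetween p a b d"
      by blast
    with inj have "cyc_between (cpos p a) (cpos p b) (cpos p c) \<and> cyc_between (cpos p b) (cpos p a) (cpos p d)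
        \<or> cyc_between (cpos p a) (cpos p b) (cpos p d) \<and> cyc_between (cpos p b) (cpos p a) (cpos p c)"
      by (intro between_imp_cyc_between) blast+
    with abcd oint show "\<exists>a\<in>B. \<exists>b\<in>B. \<exists>c\<in>B'. \<exists>d\<in>B'. c \<in> oint p a b \<and> d \<in> oint p b a"
      by blast
  qed
  then show ?thesis
    by (simp add: crosses_def)
qed

lemma crosses_betweenI:
  assumes "B \<subseteq> points p" "B' \<subseteq> points p" "B \<noteq> B'"
    and "a \<in> B" "b \<in> B" "c \<in> B'" "d \<in> B'" "a \<noteq> b" "d \<noteq> a" "d \<noteq> b"
    and "cbetween p a b c" "\<not> cbetween p a b d"
  shows "crosses p B B'"
proof -
  have "\<exists>a\<in>B. \<exists>b\<in>B. \<exists>c\<in>B'. \<exists>d\<in>B'.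
      a \<noteq> b \<and> d \<noteq> a \<and> d \<noteq> b \<and> cbetween p a b c \<and> \<not> cbetween p a b d"
    using assms(4-) by blast
  then show ?thesis
    using crosses_iff_between[OF assms(1,2)] assms(3) by simp
qed

lemma crosses_betweenE:
  assumes "crosses p B B'" "B \<subseteq> points p" "B' \<subseteq> points p"
  obtains a b c d where "a \<in> B" "b \<in> B" "c \<in> B'" "d \<in> B'" "a \<noteq> b" "d \<noteq> a" "d \<noteq> b"
    "cbetween p a b c" "\<not> cbetween p a b d"
proof -
  have "\<exists>a\<in>B. \<exists>b\<in>B. \<exists>c\<in>B'. \<exists>d\<in>B'.
      a \<noteq> b \<and> d \<noteq> a \<and> d \<noteq> b \<and> cbetween p a b c \<and> \<not> cbetween p a b d"
    using assms crosses_iff_between by simp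
  then show thesis
    using that by blast
qed

lemma between_swap:
  fixes a b c d :: "'a::linorder"
  assumes "between a b c" "\<not> between a b d" "d \<noteq> a" "d \<noteq> b"
  shows "c \<noteq> d" "a \<noteq> c" "b \<noteq> c" "between c d a \<noteq> between c d b"
  using assms unfolding between_def by auto

lemma crosses_sym:
  assumes "crosses p B B'" "B \<subseteq> points p" "B' \<subseteq> points p"
  shows "crosses p B' B"
proof -
  obtain a b c d where abcd: "a \<in> B" "b \<in> B" "c \<in> B'" "d \<in> B'" "a \<noteq> b" "d \<noteq> a" "d \<noteq> b"
    and bc: "cbetween p a b c" and bd: "\<not> cbetween p a b d"
    using assms by (rule crosses_betweenE)
  have ne: "B' \<noteq> B"
    using assms(1) by (auto simp: crosses_def)
  have "cpos p d \<noteq> cpos p a" "cpos p d \<noteq> cpos p b"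
    using abcd assms cpos_inject by blast+
  note swap = between_swap[OF bc bd this]
  then have "c \<noteq> d" "a \<noteq> c" "b \<noteq> c"
    by auto
  show ?thesis
  proof (cases "cbetween p c d a")
    case True
    then show ?thesis
      using swap(4) abcd \<open>c \<noteq> d\<close> \<open>a \<noteq> c\<close> \<open>b \<noteq> c\<close>
      by (intro crosses_betweenI[OF assms(3,2) ne, of c d a b]) auto
  next
    case False
    then show ?thesis
      using swap(4) abcd \<open>c \<noteq> d\<close> \<open>a \<noteq> c\<close> \<open>b \<noteq> c\<close>
      by (intro crosses_betweenI[OF assms(3,2) ne, of c d b a]) auto
  qed
qed

lemma not_crosses_interval:
  assumes "B \<subseteq> points p" "B' \<subseteq> points p"
    and "\<forall>x\<in>B. cpos p x \<in> {n..<m}" "\<forall>x\<in>B'. cpos p x \<notin> {n..<m}"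
  shows "\<not> crosses p B B'"
proof
  assume "crosses p B B'"
  then obtain a b c where "a \<in> B" "b \<in> B" "c \<in> B'" "cbetween p a b c"
    using assms(1,2) crosses_iff_between by blast
  moreover from this have "cpos p a \<in> {n..<m}" "cpos p b \<in> {n..<m}" "cpos p c \<notin> {n..<m}"
    using assms(3,4) by blast+
  ultimately show False
    by (auto simp: between_def)
qed

lemma crosses_transfer:
  assumes "crosses p (g ` B1) (g ` B2)" "B1 \<subseteq> points p'" "B2 \<subseteq> points p'"
    and "g ` points p' \<subseteq> points p"
    and "(\<forall>x\<in>points p'. \<forall>y\<in>points p'. cpos p (g x) < cpos p (g y) \<longleftrightarrow> cpos p' x < cpos p' y)
       \<or> (\<forall>x\<in>points p'. \<forall>y\<in>points p'. cpos p (g x) < cpos p (g y) \<longleftrightarrow> cpos p' y < cpos p' x)"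
  shows "crosses p' B1 B2"
proof -
  have sub: "g ` B1 \<subseteq> points p" "g ` B2 \<subseteq> points p"
    using assms(2-4) by blast+
  have "\<exists>a\<in>B1. \<exists>b\<in>B1. \<exists>c\<in>B2. \<exists>d\<in>B2. g a \<noteq> g b \<and> g d \<noteq> g a \<and> g d \<noteq> g b
      \<and> cbetween p (g a) (g b) (g c) \<and> \<not> cbetween p (g a) (g b) (g d)"
    using assms(1) unfolding crosses_iff_between[OF sub] Bex_def image_iff by blast
  then obtain a b c d where abcd: "a \<in> B1" "b \<in> B1" "c \<in> B2" "d \<in> B2"
    "g a \<noteq> g b" "g d \<noteq> g a" "g d \<noteq> g b"
    and bc: "cbetween p (g a) (g b) (g c)" and bd: "\<not> cbetween p (g a) (g b) (g d)"
    by blast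
  have transfer: "cbetween p (g x) (g y) (g z) \<longleftrightarrow> cbetween p' x y z"
    if "x \<in> points p'" "y \<in> points p'" "z \<in> points p'" for x y z
    using assms(5)
  proof
    assume "\<forall>x\<in>points p'. \<forall>y\<in>points p'. cpos p (g x) < cpos p (g y) \<longleftrightarrow> cpos p' x < cpos p' y"
    then show ?thesis
      using that by (simp add: between_def)
  next
    assume "\<forall>x\<in>points p'. \<forall>y\<in>points p'. cpos p (g x) < cpos p (g y) \<longleftrightarrow> cpos p' y < cpos p' x"
    then show ?thesis
      using that by (simp add: between_def) blast
  qed
  have "a \<noteq> b" "d \<noteq> a" "d \<noteq> b" "B1 \<noteq> B2"
    using abcd assms(1) by (auto simp: crosses_def)
  moreover have "cbetween p' a b c" "\<not> cbetween p' a b d"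
    using bc bd transfer abcd(1-4) assms(2,3) by (auto simp: subset_iff)
  ultimately show ?thesis
    using crosses_betweenI[OF assms(2,3)] abcd(1-4) by blast
qed

lemma crosses_pair_iff:
  assumes "{a, b} \<subseteq> points p" "{c, d} \<subseteq> points p" "{a, b} \<inter> {c, d} = {}" "a \<noteq> b"
  shows "crosses p {a, b} {c, d} \<longleftrightarrow> cbetween p a b c \<noteq> cbetween p a b d"
proof
  assume "crosses p {a, b} {c, d}"
  then obtain a' b' c' d' where "a' \<in> {a, b}" "b' \<in> {a, b}" "c' \<in> {c, d}" "d' \<in> {c, d}"
    "a' \<noteq> b'" "d' \<noteq> a'" "d' \<noteq> b'" "cbetween p a' b' c'" "\<not> cbetween p a' b' d'"
    using assms(1,2) by (rule crosses_betweenE)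
  note ab' = this(1,2,5) and cd' = this(3,4) and bc' = this(8) and bd' = this(9)
  from ab' have "a' = a \<and> b' = b \<or> a' = b \<and> b' = a"
    by auto
  then have same: "cbetween p a' b' x \<longleftrightarrow> cbetween p a b x" for x
    by (auto simp: between_commute)
  from bc' bd' have "c' \<noteq> d'"
    by auto
  with cd' have "c' = c \<and> d' = d \<or> c' = d \<and> d' = c"
    by auto
  then show "cbetween p a b c \<noteq> cbetween p a b d"
    using bc' bd' unfolding same by auto
next
  assume between: "cbetween p a b c \<noteq> cbetween p a b d"
  have ne: "a \<noteq> c" "a \<noteq> d" "b \<noteq> c" "b \<noteq> d" "{a, b} \<noteq> {c, d}"
    using assms(3) by auto
  show "crosses p {a, b} {c, d}"
  proof (cases "cbetween p a b c")
    case True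
    then show ?thesis
      using between ne assms(4) by (intro crosses_betweenI[OF assms(1,2), of a b c d]) auto
  next
    case False
    then show ?thesis
      using between ne assms(4) by (intro crosses_betweenI[OF assms(1,2), of a b d c]) auto
  qed
qed

lemma between_iff_odd_card:
  assumes "cpos p a \<noteq> cpos p b" "cpos p v \<noteq> cpos p a" "cpos p v \<noteq> cpos p b"
  shows "cbetween p a b v \<longleftrightarrow> odd (card {z \<in> {a, b}. cpos p z < cpos p v})"
proof -
  have "a \<noteq> b" using assms(1) by auto
  moreover have "{z \<in> {a, b}. cpos p z < cpos p v} =
      (if cpos p a < cpos p v then {a} else {}) \<union> (if cpos p b < cpos p v then {b} else {})"
    by auto
  ultimately show ?thesis
    using assms by (auto simp: between_def)
qed

section \<open>Partitions whose crossing blocks have bounded level gap\<close>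

definition crossing_gap_bounded :: "int \<Rightarrow> part \<Rightarrow> bool" where
  "crossing_gap_bounded M p \<longleftrightarrow> (\<forall>B\<in>blks p. \<forall>B'\<in>blks p. crosses p B B' \<longrightarrow>
     (\<forall>a\<in>B. \<forall>a'\<in>B'. \<bar>level p a - level p a'\<bar> < M))"

lemma crossing_gap_boundedI:
  assumes "\<And>B B' a a'. B \<in> blks p \<Longrightarrow> B' \<in> blks p \<Longrightarrow> crosses p B B' \<Longrightarrow> a \<in> B \<Longrightarrow> a' \<in> B'
             \<Longrightarrow> \<bar>level p a - level p a'\<bar> < M"
  shows "crossing_gap_bounded M p"
  using assms by (simp add: crossing_gap_bounded_def)

lemma crossing_gap_boundedD:
  "crossing_gap_bounded M p \<Longrightarrow> B \<in> blks p \<Longrightarrow> B' \<in> blks p \<Longrightarrow> crosses p B B' \<Longrightarrow> a \<in> B \<Longrightarrow> a' \<in> B'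
     \<Longrightarrow> \<bar>level p a - level p a'\<bar> < M"
  by (simp add: crossing_gap_bounded_def)

lemma crossing_gap_bounded_mono:
  "crossing_gap_bounded M p \<Longrightarrow> M \<le> M' \<Longrightarrow> crossing_gap_bounded M' p"
  by (force simp: crossing_gap_bounded_def)

lemma crossing_gap_bounded_npoints:
  assumes "wf_part p" "2 * int (npoints p) < M"
  shows "crossing_gap_bounded M p"
proof (rule crossing_gap_boundedI)
  fix B B' a a' assume "B \<in> blks p" "B' \<in> blks p" "a \<in> B" "a' \<in> B'"
  then have "a \<in> points p" "a' \<in> points p"
    using wf_part_block_subset[OF assms(1)] by auto
  then show "\<bar>level p a - level p a'\<bar> < M"
    using level_bound[of a p] level_bound[of a' p] assms(2) by linarith
qed

lemma crossing_gap_bounded_single_block: "blks p = {B} \<Longrightarrow> crossing_gap_bounded M p"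
  by (simp add: crossing_gap_bounded_def crosses_def)

lemma finite_crossing_gap_bounded:
  assumes "finite G" "G \<subseteq> {p. wf_part p}"
  shows "\<exists>M. \<forall>p\<in>G. crossing_gap_bounded M p"
proof
  let ?M = "2 * int (Max (insert 0 (npoints ` G))) + 1"
  show "\<forall>p\<in>G. crossing_gap_bounded ?M p"
  proof
    fix p assume "p \<in> G"
    then have "npoints p \<le> Max (insert 0 (npoints ` G))"
      using assms(1) by simp
    with \<open>p \<in> G\<close> assms(2) show "crossing_gap_bounded ?M p"
      by (intro crossing_gap_bounded_npoints) auto
  qed
qed

abbreviation tensor_shift :: "part \<Rightarrow> pt \<Rightarrow> pt" where
  "tensor_shift p \<equiv> shift_pt (length (upc p)) (length (loc p))"

lemma tensor_simps:
  "upc (tensor p q) = upc p @ upc q" "loc (tensor p q) = loc p @ loc q"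
  "blks (tensor p q) = blks p \<union> image (tensor_shift p) ` blks q"
  by (simp_all add: tensor_def)

lemma row_height_append_left: "j \<le> length xs \<Longrightarrow> row_height (xs @ ys) j = row_height xs j"
  by (induction j) (auto simp: row_height_def nth_append)

lemma row_height_append_right:
  "row_height (xs @ ys) (length xs + j) = row_height xs (length xs) + row_height ys j"
  by (induction j) (auto simp: row_height_def nth_append)

lemma row_level_append_right:
  "row_level (xs @ ys) (j + length xs) = row_height xs (length xs) + row_level ys j"
  using row_height_append_right[of xs ys j] row_height_append_right[of xs ys "Suc j"]
  by (simp add: row_level_def add.commute)

lemma level_tensor_left: "x \<in> points p \<Longrightarrow> level (tensor p q) x = level p x"
  by (cases x) (auto simp: tensor_simps points_iff row_level_def row_height_append_left)

lemma level_tensor_right: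
  assumes "p \<in> P2nb"
  shows "level (tensor p q) (tensor_shift p y) = level q y + row_height (loc p) (length (loc p))"
  using P2nb_rows_balanced[OF assms]
  by (cases y) (simp_all add: tensor_simps row_level_append_right)

lemma points_tensor_left: "x \<in> points p \<Longrightarrow> x \<in> points (tensor p q)"
  by (cases x) (auto simp: points_iff tensor_simps)

lemma points_tensor_right: "y \<in> points q \<Longrightarrow> tensor_shift p y \<in> points (tensor p q)"
  by (cases y) (auto simp: points_iff tensor_simps)

lemma cpos_tensor_left:
  "x \<in> points p \<Longrightarrow> cpos (tensor p q) x =
     (if cpos p x < length (loc p) then cpos p x else cpos p x + npoints q)"
  by (cases x) (auto simp: points_iff tensor_simps npoints_def)

lemma cpos_tensor_right:
  "y \<in> points q \<Longrightarrow> cpos (tensor p q) (tensor_shift p y) = length (loc p) + cpos q y"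
  by (cases y) (auto simp: points_iff tensor_simps npoints_def)

lemma blocks_tensor_subset:
  assumes "wf_part p" "wf_part q" "B \<in> blks (tensor p q)"
  shows "B \<subseteq> points (tensor p q)"
proof -
  from assms(3) consider "B \<in> blks p" | B0 where "B0 \<in> blks q" "B = tensor_shift p ` B0"
    by (auto simp: tensor_simps)
  then show ?thesis
  proof cases
    case 1
    then show ?thesis
      using wf_part_block_subset[OF assms(1)] points_tensor_left by blast
  next
    case 2
    then show ?thesis
      using wf_part_block_subset[OF assms(2)] points_tensor_right by blast
  qed
qed

lemma crosses_tensor_left:
  assumes "wf_part p" "B \<in> blks p" "B' \<in> blks p" "crosses (tensor p q) B B'"
  shows "crosses p B B'"
proof (rule crosses_transfer[where g = id and p = "tensor p q"])
  show "B \<subseteq> points p" "B' \<subseteq> points p"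
    using assms wf_part_block_subset by blast+
  show "crosses (tensor p q) (id ` B) (id ` B')" "id ` points p \<subseteq> points (tensor p q)"
    using assms(4) points_tensor_left by auto
  show "(\<forall>x\<in>points p. \<forall>y\<in>points p. cpos (tensor p q) (id x) < cpos (tensor p q) (id y) \<longleftrightarrow> cpos p x < cpos p y)
    \<or> (\<forall>x\<in>points p. \<forall>y\<in>points p. cpos (tensor p q) (id x) < cpos (tensor p q) (id y) \<longleftrightarrow> cpos p y < cpos p x)"
    by (simp add: cpos_tensor_left)
qed

lemma crosses_tensor_right:
  assumes "wf_part q" "B \<in> blks q" "B' \<in> blks q"
    and "crosses (tensor p q) (tensor_shift p ` B) (tensor_shift p ` B')"
  shows "crosses q B B'"
proof (rule crosses_transfer[where g = "tensor_shift p" and p = "tensor p q"])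
  show "B \<subseteq> points q" "B' \<subseteq> points q"
    using assms wf_part_block_subset by blast+
  show "tensor_shift p ` points q \<subseteq> points (tensor p q)"
    using points_tensor_right by auto
  show "(\<forall>x\<in>points q. \<forall>y\<in>points q. cpos (tensor p q) (tensor_shift p x) < cpos (tensor p q) (tensor_shift p y)
          \<longleftrightarrow> cpos q x < cpos q y)
    \<or> (\<forall>x\<in>points q. \<forall>y\<in>points q. cpos (tensor p q) (tensor_shift p x) < cpos (tensor p q) (tensor_shift p y)
          \<longleftrightarrow> cpos q y < cpos q x)"
    by (simp add: cpos_tensor_right)
qed (fact assms(4))

text \<open>The points of the right factor form an interval of the cyclic order of the tensor product.\<close>

lemma not_crosses_tensor_mixed:
  assumes "wf_part p" "wf_part q" "B \<in> blks p" "B0 \<in> blks q"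
  shows "\<not> crosses (tensor p q) (tensor_shift p ` B0) B"
proof (rule not_crosses_interval)
  let ?I = "{length (loc p)..<length (loc p) + npoints q}"
  have sub: "B \<subseteq> points p" "B0 \<subseteq> points q"
    using assms wf_part_block_subset by blast+
  then show "tensor_shift p ` B0 \<subseteq> points (tensor p q)" "B \<subseteq> points (tensor p q)"
    using points_tensor_left points_tensor_right by auto
  show "\<forall>x\<in>tensor_shift p ` B0. cpos (tensor p q) x \<in> ?I"
  proof
    fix x assume "x \<in> tensor_shift p ` B0"
    then obtain y where "y \<in> points q" "x = tensor_shift p y"
      using sub by blast
    then show "cpos (tensor p q) x \<in> ?I"
      using cpos_less_npoints[of y q] by (simp add: cpos_tensor_right)
  qed
  show "\<forall>x\<in>B. cpos (tensor p q) x \<notin> ?I"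
  proof
    fix x assume "x \<in> B"
    then have "x \<in> points p"
      using sub by blast
    then show "cpos (tensor p q) x \<notin> ?I"
      by (simp add: cpos_tensor_left)
  qed
qed

lemma crosses_tensor_cases:
  assumes "wf_part p" "wf_part q" "B \<in> blks (tensor p q)" "B' \<in> blks (tensor p q)"
    and "crosses (tensor p q) B B'"
  obtains "B \<in> blks p" "B' \<in> blks p" "crosses p B B'"
  | B0 B0' where "B0 \<in> blks q" "B0' \<in> blks q" "B = tensor_shift p ` B0" "B' = tensor_shift p ` B0'"
    "crosses q B0 B0'"
proof -
  let ?t = "tensor p q"
  have mixed: False if "B1 \<in> blks p" "B0 \<in> blks q" "crosses ?t B1 (tensor_shift p ` B0) \<or>
      crosses ?t (tensor_shift p ` B0) B1" for B1 B0
  proof -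
    have "B1 \<in> blks ?t" "tensor_shift p ` B0 \<in> blks ?t"
      using that(1,2) by (auto simp: tensor_simps)
    then show False
      using that not_crosses_tensor_mixed[OF assms(1,2) that(1,2)] crosses_sym
        blocks_tensor_subset[OF assms(1,2)] by blast
  qed
  have "B \<in> blks p \<or> (\<exists>B0\<in>blks q. B = tensor_shift p ` B0)"
    "B' \<in> blks p \<or> (\<exists>B0\<in>blks q. B' = tensor_shift p ` B0)"
    using assms(3,4) by (auto simp: tensor_simps)
  then show thesis
    using that mixed assms(5) crosses_tensor_left[OF assms(1)] crosses_tensor_right[OF assms(2)] by blast
qed

lemma crossing_gap_bounded_tensor:
  assumes "p \<in> P2nb" "q \<in> P2nb" "crossing_gap_bounded M p" "crossing_gap_bounded M q"
  shows "crossing_gap_bounded M (tensor p q)"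
proof (rule crossing_gap_boundedI)
  let ?t = "tensor p q"
  have wf: "wf_part p" "wf_part q"
    using assms(1,2) P2nb_wf_part by blast+
  fix B B' a a' assume B: "B \<in> blks ?t" "B' \<in> blks ?t" "crosses ?t B B'" "a \<in> B" "a' \<in> B'"
  from wf B(1-3) show "\<bar>level ?t a - level ?t a'\<bar> < M"
  proof (cases rule: crosses_tensor_cases)
    case 1
    then have "level ?t a = level p a" "level ?t a' = level p a'"
      using B(4,5) wf_part_block_subset[OF wf(1)] level_tensor_left by blast+
    then show ?thesis
      using crossing_gap_boundedD[OF assms(3) 1 B(4,5)] by simp
  next
    case (2 B0 B0')
    then obtain a0 a0' where "a0 \<in> B0" "a = tensor_shift p a0" "a0' \<in> B0'" "a' = tensor_shift p a0'"
      using B(4,5) by blast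
    then show ?thesis
      using crossing_gap_boundedD[OF assms(4) 2(1,2,5)] level_tensor_right[OF assms(1)] by simp
  qed
qed

lemma level_invol: "level (invol p) (swap_pt x) = level p x"
  by (cases x) (auto simp: invol_def)

lemma points_invol: "x \<in> points p \<Longrightarrow> swap_pt x \<in> points (invol p)"
  by (cases x) (auto simp: invol_def points_iff)

lemma cpos_invol: "x \<in> points p \<Longrightarrow> cpos (invol p) (swap_pt x) = npoints p - 1 - cpos p x"
  by (cases x) (auto simp: invol_def points_iff npoints_def)

lemma crosses_invol:
  assumes "wf_part p" "B \<in> blks p" "B' \<in> blks p" "crosses (invol p) (swap_pt ` B) (swap_pt ` B')"
  shows "crosses p B B'"
proof (rule crosses_transfer[where g = swap_pt and p = "invol p"])
  show "B \<subseteq> points p" "B' \<subseteq> points p"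
    using assms wf_part_block_subset by blast+
  show "swap_pt ` points p \<subseteq> points (invol p)"
    using points_invol by auto
  have "\<forall>x\<in>points p. \<forall>y\<in>points p. cpos (invol p) (swap_pt x) < cpos (invol p) (swap_pt y) \<longleftrightarrow> cpos p y < cpos p x"
    using cpos_invol cpos_less_npoints by fastforce
  then show "(\<forall>x\<in>points p. \<forall>y\<in>points p. cpos (invol p) (swap_pt x) < cpos (invol p) (swap_pt y) \<longleftrightarrow> cpos p x < cpos p y)
    \<or> (\<forall>x\<in>points p. \<forall>y\<in>points p. cpos (invol p) (swap_pt x) < cpos (invol p) (swap_pt y) \<longleftrightarrow> cpos p y < cpos p x)"
    by blast
qed (fact assms(4))

lemma crossing_gap_bounded_invol:
  assumes "wf_part p" "crossing_gap_bounded M p"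
  shows "crossing_gap_bounded M (invol p)"
proof (rule crossing_gap_boundedI)
  fix B B' a a' assume B: "B \<in> blks (invol p)" "B' \<in> blks (invol p)" "crosses (invol p) B B'"
    "a \<in> B" "a' \<in> B'"
  then obtain B0 B0' where B0: "B0 \<in> blks p" "B = swap_pt ` B0" "B0' \<in> blks p" "B' = swap_pt ` B0'"
    by (auto simp: invol_def)
  with B(4,5) obtain a0 a0' where "a0 \<in> B0" "a = swap_pt a0" "a0' \<in> B0'" "a' = swap_pt a0'"
    by blast
  then show "\<bar>level (invol p) a - level (invol p) a'\<bar> < M"
    using crossing_gap_boundedD[OF assms(2) B0(1,3) crosses_invol[OF assms(1) B0(1,3)]] B(3) B0
    by (simp add: level_invol)
qed

lemma comp_simps:
  "upc (comp p q) = upc q" "loc (comp p q) = loc p"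
  "blks (comp p q) = {{y \<in> points (comp p q). (outer x, outer y) \<in> (comp_edges p q)\<^sup>*} | x. x \<in> points (comp p q)}"
proof -
  show "upc (comp p q) = upc q" "loc (comp p q) = loc p"
    by (simp_all add: comp_def Let_def)
  have points: "points (Part (upc q) (loc p) {}) = points (comp p q)"
    by (simp add: points_def comp_def Let_def)
  show "blks (comp p q) =
      {{y \<in> points (comp p q). (outer x, outer y) \<in> (comp_edges p q)\<^sup>*} | x. x \<in> points (comp p q)}"
    unfolding points[symmetric] by (simp add: comp_def Let_def)
qed

lemma comp_edges_cases:
  assumes "(v, w) \<in> comp_edges p q"
  obtains (upper) x y B where "v = Inl x" "w = Inl y" "B \<in> blks q" "x \<in> B" "y \<in> B"
  | (lower) x y B where "v = Inr x" "w = Inr y" "B \<in> blks p" "x \<in> B" "y \<in> B"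
  | (down) i where "v = Inl (L i)" "w = Inr (U i)" "i < length (upc p)"
  | (up) i where "v = Inr (U i)" "w = Inl (L i)" "i < length (upc p)"
  using assms unfolding comp_edges_def by auto

lemma comp_edges_block_upper: "B \<in> blks q \<Longrightarrow> x \<in> B \<Longrightarrow> y \<in> B \<Longrightarrow> (Inl x, Inl y) \<in> comp_edges p q"
  unfolding comp_edges_def by auto

lemma comp_edges_block_lower: "B \<in> blks p \<Longrightarrow> x \<in> B \<Longrightarrow> y \<in> B \<Longrightarrow> (Inr x, Inr y) \<in> comp_edges p q"
  unfolding comp_edges_def by auto

lemma comp_edges_middle:
  "i < length (upc p) \<Longrightarrow> (Inl (L i), Inr (U i)) \<in> comp_edges p q \<and> (Inr (U i), Inl (L i)) \<in> comp_edges p q"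
  unfolding comp_edges_def by simp

lemma sym_comp_edges: "sym (comp_edges p q)"
  unfolding comp_edges_def sym_def by blast

definition comp_class :: "part \<Rightarrow> part \<Rightarrow> pt + pt \<Rightarrow> (pt + pt) set" where
  "comp_class p q v = {w. (v, w) \<in> (comp_edges p q)\<^sup>*}"

lemma comp_class_edge:
  assumes "v \<in> comp_class p q u" "(v, w) \<in> comp_edges p q \<or> (w, v) \<in> comp_edges p q"
  shows "w \<in> comp_class p q u"
proof -
  have "(v, w) \<in> comp_edges p q"
    using assms(2) symD[OF sym_comp_edges] by blast
  with assms(1) show ?thesis
    by (auto simp: comp_class_def intro: rtrancl_into_rtrancl)
qed

lemma comp_class_eq:
  assumes "v \<in> comp_class p q u"
  shows "comp_class p q v = comp_class p q u"
proof -
  have uv: "(u, v) \<in> (comp_edges p q)\<^sup>*"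
    using assms by (simp add: comp_class_def)
  then have vu: "(v, u) \<in> (comp_edges p q)\<^sup>*"
    using symD[OF sym_rtrancl[OF sym_comp_edges]] by blast
  show ?thesis
    unfolding comp_class_def using rtrancl_trans[OF uv] rtrancl_trans[OF vu] by blast
qed

lemma comp_class_block_upper:
  "B \<in> blks q \<Longrightarrow> z \<in> B \<Longrightarrow> Inl z \<in> comp_class p q u \<Longrightarrow> Inl ` B \<subseteq> comp_class p q u"
  using comp_class_edge comp_edges_block_upper by blast

lemma comp_class_block_lower:
  "B \<in> blks p \<Longrightarrow> z \<in> B \<Longrightarrow> Inr z \<in> comp_class p q u \<Longrightarrow> Inr ` B \<subseteq> comp_class p q u"
  using comp_class_edge comp_edges_block_lower by blast

lemma comp_block_iff_class:
  assumes "B \<in> blks (comp p q)" "a \<in> B" "y \<in> points (comp p q)"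
  shows "y \<in> B \<longleftrightarrow> outer y \<in> comp_class p q (outer a)"
proof -
  obtain x where B: "B = {y \<in> points (comp p q). outer y \<in> comp_class p q (outer x)}"
    using assms(1) unfolding comp_simps comp_class_def by blast
  then have "comp_class p q (outer a) = comp_class p q (outer x)"
    using assms(2) comp_class_eq by blast
  with B assms(3) show ?thesis
    by blast
qed

definition comp_level :: "part \<Rightarrow> part \<Rightarrow> pt + pt \<Rightarrow> int" where
  "comp_level p q v = (case v of Inl z \<Rightarrow> level q z | Inr z \<Rightarrow> level p z)"

lemma comp_level_class:
  assumes "p \<in> S0" "q \<in> S0" "loc q = upc p" "v \<in> comp_class p q (outer x)"
  shows "comp_level p q v = level (comp p q) x"
proof -
  have edge: "comp_level p q v = comp_level p q w" if "(v, w) \<in> comp_edges p q" for v w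
    using that
  proof (cases rule: comp_edges_cases)
    case (upper x y B)
    then show ?thesis
      using S0_level_eq[OF assms(2) upper(3-5)] by (simp add: comp_level_def)
  next
    case (lower x y B)
    then show ?thesis
      using S0_level_eq[OF assms(1) lower(3-5)] by (simp add: comp_level_def)
  qed (use assms(3) in \<open>simp_all add: comp_level_def\<close>)
  have "(outer x, v) \<in> (comp_edges p q)\<^sup>*"
    using assms(4) by (simp add: comp_class_def)
  then have "comp_level p q (outer x) = comp_level p q v"
  proof (induction rule: rtrancl_induct)
    case (step y z)
    then show ?case using edge[of y z] by simp
  qed simp
  moreover have "comp_level p q (outer x) = level (comp p q) x"
    by (cases x) (auto simp: comp_level_def comp_simps)
  ultimately show ?thesis
    by simp
qed

definition count_before :: "part \<Rightarrow> (pt \<Rightarrow> bool) \<Rightarrow> pt \<Rightarrow> nat" where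
  "count_before p P y = card {z \<in> points p. P z \<and> cpos p z < cpos p y}"

lemma count_before_lower:
  assumes "j \<le> length (loc p)"
  shows "count_before p P (L j) = card {j'. j' < j \<and> P (L j')}"
proof -
  have "{z \<in> points p. P z \<and> cpos p z < cpos p (L j)} = L ` {j'. j' < j \<and> P (L j')}"
  proof safe
    fix z assume "z \<in> points p" "P z" "cpos p z < cpos p (L j)"
    with assms show "z \<in> L ` {j'. j' < j \<and> P (L j')}"
      by (cases z) (auto simp: points_iff)
  qed (use assms in \<open>auto simp: points_iff\<close>)
  then show ?thesis
    by (simp add: count_before_def card_image inj_on_def)
qed

lemma count_before_upper:
  assumes "i < length (upc p)"
  shows "count_before p P (U i) =
    card {j. j < length (loc p) \<and> P (L j)} + card {j. i < j \<and> j < length (upc p) \<and> P (U j)}"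
proof -
  have "{z \<in> points p. P z \<and> cpos p z < cpos p (U i)} =
      L ` {j. j < length (loc p) \<and> P (L j)} \<union> U ` {j. i < j \<and> j < length (upc p) \<and> P (U j)}"
  proof safe
    fix z assume "z \<in> points p" "P z" "cpos p z < cpos p (U i)"
      "z \<notin> U ` {j. i < j \<and> j < length (upc p) \<and> P (U j)}"
    with assms show "z \<in> L ` {j. j < length (loc p) \<and> P (L j)}"
      by (cases z) (auto simp: points_iff)
  qed (use assms in \<open>auto simp: points_iff\<close>)
  moreover have "L ` A \<inter> U ` A' = {}" for A A'
    by auto
  ultimately show ?thesis
    by (simp add: count_before_def card_Un_disjoint card_image inj_on_def)
qed

lemma card_points_filter:
  "card {z \<in> points p. P z} = card {j. j < length (loc p) \<and> P (L j)} + card {j. j < length (upc p) \<and> P (U j)}"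
proof -
  have "{z \<in> points p. P z} = L ` {j. j < length (loc p) \<and> P (L j)} \<union> U ` {j. j < length (upc p) \<and> P (U j)}"
    by (auto simp: points_def)
  moreover have "L ` A \<inter> U ` A' = {}" for A A'
    by auto
  ultimately show ?thesis
    by (simp add: card_Un_disjoint card_image inj_on_def)
qed

lemma card_split_at:
  fixes i n :: nat
  assumes "i < n" "\<not> P i"
  shows "card {j. j < n \<and> P j} = card {j. j < i \<and> P j} + card {j. i < j \<and> j < n \<and> P j}"
proof -
  have "{j. j < n \<and> P j} = {j. j < i \<and> P j} \<union> {j. i < j \<and> j < n \<and> P j}"
  proof (rule set_eqI)
    fix j
    show "j \<in> {j. j < n \<and> P j} \<longleftrightarrow> j \<in> {j. j < i \<and> P j} \<union> {j. i < j \<and> j < n \<and> P j}"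
      using assms by (cases "j = i") auto
  qed
  also have "card ({j. j < i \<and> P j} \<union> {j. i < j \<and> j < n \<and> P j})
      = card {j. j < i \<and> P j} + card {j. i < j \<and> j < n \<and> P j}"
    by (rule card_Un_disjoint) auto
  finally show ?thesis .
qed

lemma count_before_eq_sum_blocks:
  assumes wf: "wf_part p" and P: "\<forall>B\<in>blks p. (\<exists>z\<in>B. P z) \<longrightarrow> (\<forall>z\<in>B. P z)"
  shows "count_before p P y = (\<Sum>B | B \<in> blks p \<and> (\<forall>z\<in>B. P z). card {z \<in> B. cpos p z < cpos p y})"
proof -
  let ?PB = "{B \<in> blks p. \<forall>z\<in>B. P z}"
  have "{z \<in> points p. P z \<and> cpos p z < cpos p y} = (\<Union>B\<in>?PB. {z \<in> B. cpos p z < cpos p y})"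
  proof (rule set_eqI, rule iffI)
    fix z assume z: "z \<in> {z \<in> points p. P z \<and> cpos p z < cpos p y}"
    then obtain B where "B \<in> blks p" "z \<in> B"
      using wf partition_onD1 by (fastforce simp: wf_part_def)
    with z P show "z \<in> (\<Union>B\<in>?PB. {z \<in> B. cpos p z < cpos p y})"
      by blast
  qed (use wf_part_block_subset[OF wf] in blast)
  moreover have "\<forall>B\<in>?PB. \<forall>B'\<in>?PB. B \<noteq> B' \<longrightarrow>
      {z \<in> B. cpos p z < cpos p y} \<inter> {z \<in> B'. cpos p z < cpos p y} = {}"
    using wf_part_blocks_disjoint[OF wf] by blast
  ultimately show ?thesis
    unfolding count_before_def using wf_part_finite_blocks[OF wf] by (simp add: card_UN_disjoint)
qed

text \<open>The number of points of a two-point block before \<open>y\<close> is odd exactly if \<open>y\<close> lies between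
  them, and both points of a block it does not cross lie on the same side.\<close>

lemma odd_card_before_noncrossing:
  assumes p: "p \<in> P2nb" and "B \<in> blks p" "B0 \<in> blks p" "B \<inter> B0 = {}" "\<not> crosses p B B0"
    and "y1 \<in> B0" "y2 \<in> B0"
  shows "odd (card {z \<in> B. cpos p z < cpos p y1}) \<longleftrightarrow> odd (card {z \<in> B. cpos p z < cpos p y2})"
proof -
  have wf: "wf_part p"
    using p by (rule P2nb_wf_part)
  from p assms(2) obtain a b where ab: "B = {a, b}" "a \<noteq> b" "ncol p a = White" "ncol p b = Black"
    by (rule P2nb_block)
  from p assms(3) obtain c d where cd: "B0 = {c, d}" "c \<noteq> d" "ncol p c = White" "ncol p d = Black"
    by (rule P2nb_block)
  have sub: "{a, b} \<subseteq> points p" "{c, d} \<subseteq> points p"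
    using assms(2,3) ab cd wf_part_block_subset[OF wf] by auto
  have disj: "{a, b} \<inter> {c, d} = {}"
    using assms(4) ab cd by simp
  have "cbetween p a b c = cbetween p a b d"
    using assms(5) ab cd crosses_pair_iff[OF sub disj ab(2)] by simp
  then have same: "cbetween p a b y1 = cbetween p a b y2"
    using assms(6,7) cd(1) by auto
  have y: "y1 \<in> points p" "y2 \<in> points p" "y1 \<notin> {a, b}" "y2 \<notin> {a, b}"
    using assms(6,7) cd(1) sub disj by auto
  have "odd (card {z \<in> B. cpos p z < cpos p y}) \<longleftrightarrow> cbetween p a b y"
    if "y \<in> points p" "y \<notin> {a, b}" for y
    using between_iff_odd_card[of p a b y] that sub ab cpos_inject by auto
  then show ?thesis
    using same y by simp
qed

lemma even_count_before_noncrossing: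
  assumes p: "p \<in> P2nb"
    and P: "\<forall>B\<in>blks p. (\<exists>z\<in>B. P z) \<longrightarrow> (\<forall>z\<in>B. P z)"
    and B0: "B0 \<in> blks p" "\<forall>z\<in>B0. \<not> P z" "y1 \<in> B0" "y2 \<in> B0"
    and nc: "\<forall>B\<in>blks p. (\<forall>z\<in>B. P z) \<longrightarrow> \<not> crosses p B B0"
  shows "even (count_before p P y1) = even (count_before p P y2)"
proof -
  let ?PB = "{B \<in> blks p. \<forall>z\<in>B. P z}"
  have wf: "wf_part p"
    using p by (rule P2nb_wf_part)
  have "odd (card {z \<in> B. cpos p z < cpos p y1}) \<longleftrightarrow> odd (card {z \<in> B. cpos p z < cpos p y2})"
    if "B \<in> ?PB" for B
    using that B0 nc by (intro odd_card_before_noncrossing[OF p]) auto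
  then have "{B \<in> ?PB. odd (card {z \<in> B. cpos p z < cpos p y1})}
      = {B \<in> ?PB. odd (card {z \<in> B. cpos p z < cpos p y2})}"
    by blast
  then show ?thesis
    unfolding count_before_eq_sum_blocks[OF wf P] using wf_part_finite_blocks(1)[OF wf]
    by (simp add: even_sum_iff)
qed

text \<open>\<open>comp_count p q X v\<close> counts the points of \<open>X\<close> before \<open>v\<close> when all points of \<open>p\<close>, in their
  cyclic order, are followed by all points of \<open>q\<close>, in theirs. Along an edge outside \<open>X\<close> its
  parity changes only if the block of the edge crosses a block inside \<open>X\<close>.\<close>

definition comp_count :: "part \<Rightarrow> part \<Rightarrow> (pt + pt) set \<Rightarrow> pt + pt \<Rightarrow> nat" where
  "comp_count p q X v = (case v of
      Inr z \<Rightarrow> count_before p (\<lambda>z. Inr z \<in> X) z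
    | Inl z \<Rightarrow> count_before q (\<lambda>z. Inl z \<in> X) z + card {z \<in> points p. Inr z \<in> X})"

lemma comp_middle_in_class_iff:
  assumes "i < length (upc p)"
  shows "Inl (L i) \<in> comp_class p q u \<longleftrightarrow> Inr (U i) \<in> comp_class p q u"
  using comp_edges_middle[OF assms] comp_class_edge by blast

lemma even_comp_count_middle:
  assumes "loc q = upc p" "i < length (upc p)" "Inl (L i) \<notin> comp_class p q u"
  shows "even (comp_count p q (comp_class p q u) (Inl (L i))) = even (comp_count p q (comp_class p q u) (Inr (U i)))"
proof -
  let ?X = "comp_class p q u"
  let ?lower = "card {j. j < length (loc p) \<and> Inr (L j) \<in> ?X}"
  let ?before = "card {j. j < i \<and> Inr (U j) \<in> ?X}"
  let ?after = "card {j. i < j \<and> j < length (upc p) \<and> Inr (U j) \<in> ?X}"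
  have "Inr (U i) \<notin> ?X"
    using assms(2,3) comp_middle_in_class_iff by blast
  then have "card {z \<in> points p. Inr z \<in> ?X} = ?lower + ?before + ?after"
    using card_points_filter[of p] card_split_at[OF assms(2), of "\<lambda>j. Inr (U j) \<in> ?X"] by simp
  moreover have "{j. j < i \<and> Inl (L j) \<in> ?X} = {j. j < i \<and> Inr (U j) \<in> ?X}"
    using assms(2) comp_middle_in_class_iff[of _ p q u] by (meson order.strict_trans)
  then have "count_before q (\<lambda>z. Inl z \<in> ?X) (L i) = ?before"
    using assms(1,2) by (simp add: count_before_lower)
  moreover have "count_before p (\<lambda>z. Inr z \<in> ?X) (U i) = ?lower + ?after"
    using assms(2) by (simp add: count_before_upper)
  ultimately have "comp_count p q ?X (Inl (L i)) = ?before + (?lower + ?before + ?after)"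
    and "comp_count p q ?X (Inr (U i)) = ?lower + ?after"
    by (simp_all add: comp_count_def)
  then show ?thesis
    by presburger
qed

definition classes_cross :: "part \<Rightarrow> part \<Rightarrow> (pt + pt) set \<Rightarrow> (pt + pt) set \<Rightarrow> bool" where
  "classes_cross p q X Y \<longleftrightarrow>
     (\<exists>x\<in>blks p. \<exists>y\<in>blks p. crosses p x y \<and> Inr ` x \<subseteq> X \<and> Inr ` y \<subseteq> Y)
   \<or> (\<exists>x\<in>blks q. \<exists>y\<in>blks q. crosses q x y \<and> Inl ` x \<subseteq> X \<and> Inl ` y \<subseteq> Y)"

lemma even_comp_count_upper_edge:
  assumes "q \<in> P2nb" "comp_class p q u \<inter> comp_class p q u' = {}"
    and "\<not> classes_cross p q (comp_class p q u) (comp_class p q u')"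
    and "B \<in> blks q" "x \<in> B" "y \<in> B" "Inl x \<in> comp_class p q u'"
  shows "even (comp_count p q (comp_class p q u) (Inl x)) = even (comp_count p q (comp_class p q u) (Inl y))"
proof -
  let ?P = "\<lambda>z. Inl z \<in> comp_class p q u"
  have B: "Inl ` B \<subseteq> comp_class p q u'"
    using comp_class_block_upper[OF assms(4,5,7)] .
  have "\<forall>B'\<in>blks q. (\<exists>z\<in>B'. ?P z) \<longrightarrow> (\<forall>z\<in>B'. ?P z)"
    using comp_class_block_upper by blast
  moreover have "\<forall>z\<in>B. \<not> ?P z"
    using B assms(2) by blast
  moreover have "\<forall>B'\<in>blks q. (\<forall>z\<in>B'. ?P z) \<longrightarrow> \<not> crosses q B' B"
    using assms(3,4) B unfolding classes_cross_def image_subset_iff by blast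
  ultimately have "even (count_before q ?P x) = even (count_before q ?P y)"
    using even_count_before_noncrossing[OF assms(1) _ assms(4) _ assms(5,6)] by blast
  then show ?thesis
    by (simp add: comp_count_def)
qed

lemma even_comp_count_lower_edge:
  assumes "p \<in> P2nb" "comp_class p q u \<inter> comp_class p q u' = {}"
    and "\<not> classes_cross p q (comp_class p q u) (comp_class p q u')"
    and "B \<in> blks p" "x \<in> B" "y \<in> B" "Inr x \<in> comp_class p q u'"
  shows "even (comp_count p q (comp_class p q u) (Inr x)) = even (comp_count p q (comp_class p q u) (Inr y))"
proof -
  let ?P = "\<lambda>z. Inr z \<in> comp_class p q u"
  have B: "Inr ` B \<subseteq> comp_class p q u'"
    using comp_class_block_lower[OF assms(4,5,7)] .
  have "\<forall>B'\<in>blks p. (\<exists>z\<in>B'. ?P z) \<longrightarrow> (\<forall>z\<in>B'. ?P z)"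
    using comp_class_block_lower by blast
  moreover have "\<forall>z\<in>B. \<not> ?P z"
    using B assms(2) by blast
  moreover have "\<forall>B'\<in>blks p. (\<forall>z\<in>B'. ?P z) \<longrightarrow> \<not> crosses p B' B"
    using assms(3,4) B unfolding classes_cross_def image_subset_iff by blast
  ultimately have "even (count_before p ?P x) = even (count_before p ?P y)"
    using even_count_before_noncrossing[OF assms(1) _ assms(4) _ assms(5,6)] by blast
  then show ?thesis
    by (simp add: comp_count_def)
qed

lemma even_comp_count_edge:
  assumes "p \<in> P2nb" "q \<in> P2nb" "loc q = upc p"
    and "comp_class p q u \<inter> comp_class p q u' = {}"
    and "\<not> classes_cross p q (comp_class p q u) (comp_class p q u')"
    and "v \<in> comp_class p q u'" "(v, w) \<in> comp_edges p q"
  shows "even (comp_count p q (comp_class p q u) v) = even (comp_count p q (comp_class p q u) w)"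
  using assms(7)
proof (cases rule: comp_edges_cases)
  case (upper x y B)
  then show ?thesis
    using even_comp_count_upper_edge[OF assms(2,4,5) upper(3-5)] assms(6) by simp
next
  case (lower x y B)
  then show ?thesis
    using even_comp_count_lower_edge[OF assms(1,4,5) lower(3-5)] assms(6) by simp
next
  case (down i)
  then show ?thesis
    using even_comp_count_middle[OF assms(3)] assms(4,6) by blast
next
  case (up i)
  then have "Inl (L i) \<in> comp_class p q u'"
    using comp_class_edge assms(6,7) by blast
  then show ?thesis
    using up even_comp_count_middle[OF assms(3)] assms(4) by blast
qed

lemma even_comp_count_class:
  assumes "p \<in> P2nb" "q \<in> P2nb" "loc q = upc p"
    and "comp_class p q u \<inter> comp_class p q u' = {}"
    and "\<not> classes_cross p q (comp_class p q u) (comp_class p q u')"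
    and "w \<in> comp_class p q u'"
  shows "even (comp_count p q (comp_class p q u) u') = even (comp_count p q (comp_class p q u) w)"
proof -
  have "(u', w) \<in> (comp_edges p q)\<^sup>*"
    using assms(6) by (simp add: comp_class_def)
  then show ?thesis
  proof (induction rule: rtrancl_induct)
    case (step v w)
    have "v \<in> comp_class p q u'"
      using step.hyps(1) by (simp add: comp_class_def)
    then show ?case
      using step.IH even_comp_count_edge[OF assms(1-5) _ step.hyps(2)] by simp
  qed simp
qed

lemma even_comp_count_outer:
  assumes "loc q = upc p" "y \<in> points (comp p q)"
  shows "even (comp_count p q (comp_class p q u) (outer y))
       = even (count_before (comp p q) (\<lambda>z. outer z \<in> comp_class p q u) y)"
proof (cases y)
  case (L j)
  then have "j < length (loc p)"
    using assms(2) by (simp add: points_iff comp_simps)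
  then show ?thesis
    using L by (simp add: comp_count_def count_before_lower comp_simps)
next
  case (U i)
  let ?X = "comp_class p q u"
  let ?lower = "card {j. j < length (loc p) \<and> Inr (L j) \<in> ?X}"
  let ?upper = "card {j. j < length (upc p) \<and> Inr (U j) \<in> ?X}"
  let ?after = "card {j. i < j \<and> j < length (upc q) \<and> Inl (U j) \<in> ?X}"
  have i: "i < length (upc q)"
    using U assms(2) by (simp add: points_iff comp_simps)
  have "{j. j < length (loc q) \<and> Inl (L j) \<in> ?X} = {j. j < length (upc p) \<and> Inr (U j) \<in> ?X}"
    using assms(1) comp_middle_in_class_iff[of _ p q u] by auto
  then have "comp_count p q ?X (outer y) = ?upper + ?after + (?lower + ?upper)"
    using U i by (simp add: comp_count_def count_before_upper card_points_filter)
  moreover have "count_before (comp p q) (\<lambda>z. outer z \<in> ?X) y = ?lower + ?after"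
    using U i by (simp add: count_before_upper comp_simps)
  ultimately show ?thesis
    by presburger
qed

lemma comp_class_disjoint:
  assumes "u' \<notin> comp_class p q u"
  shows "comp_class p q u \<inter> comp_class p q u' = {}"
proof (rule ccontr)
  assume "comp_class p q u \<inter> comp_class p q u' \<noteq> {}"
  then obtain v where "v \<in> comp_class p q u" "v \<in> comp_class p q u'"
    by blast
  then have "comp_class p q u' = comp_class p q u"
    using comp_class_eq by metis
  moreover have "u' \<in> comp_class p q u'"
    by (simp add: comp_class_def)
  ultimately show False
    using assms by simp
qed

lemma comp_crossing_lifts:
  assumes "p \<in> P2nb" "q \<in> P2nb" "loc q = upc p" "comp p q \<in> P2nb"
    and "B1 \<in> blks (comp p q)" "B2 \<in> blks (comp p q)" "crosses (comp p q) B1 B2" "a \<in> B1" "c \<in> B2"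
  shows "classes_cross p q (comp_class p q (outer a)) (comp_class p q (outer c))"
proof (rule ccontr)
  assume nc: "\<not> ?thesis"
  let ?r = "comp p q" and ?X = "comp_class p q (outer a)"
  have wf: "wf_part ?r"
    using assms(4) by (rule P2nb_wf_part)
  obtain b where B1: "B1 = {a, b}" "a \<noteq> b"
    using assms(4,5,8) by (rule P2nb_block_other)
  let ?before = "\<lambda>y. card {z \<in> {a, b}. cpos ?r z < cpos ?r y}"
  obtain d where B2: "B2 = {c, d}"
    using assms(4,6,9) by (rule P2nb_block_other)
  have sub: "{a, b} \<subseteq> points ?r" "{c, d} \<subseteq> points ?r"
    using assms(5,6) B1 B2 wf_part_block_subset[OF wf] by auto
  have disj: "{a, b} \<inter> {c, d} = {}"
    using assms(5-7) B1 B2 wf_part_blocks_disjoint[OF wf] by (auto simp: crosses_def)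
  have X: "outer z \<in> ?X \<longleftrightarrow> z \<in> {a, b}" if "z \<in> points ?r" for z
    using comp_block_iff_class[OF assms(5,8) that] B1 by simp
  then have "?X \<inter> comp_class p q (outer c) = {}"
    using sub disj by (intro comp_class_disjoint) auto
  moreover have "outer d \<in> comp_class p q (outer c)"
    using comp_block_iff_class[OF assms(6,9), of d] B2 sub by simp
  ultimately have "even (comp_count p q ?X (outer c)) = even (comp_count p q ?X (outer d))"
    using even_comp_count_class[OF assms(1-3) _ nc] by blast
  moreover have "count_before ?r (\<lambda>z. outer z \<in> ?X) y = ?before y" for y
    unfolding count_before_def using X sub by (intro arg_cong[where f = card]) auto
  ultimately have "odd (?before c) \<longleftrightarrow> odd (?before d)"
    using even_comp_count_outer[OF assms(3)] sub by simp
  moreover have parity: "odd (?before y) \<longleftrightarrow> cbetween ?r a b y" if "y \<in> {c, d}" for y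
    using between_iff_odd_card[of ?r a b y] that sub disj B1(2) cpos_inject by auto
  ultimately have "cbetween ?r a b c = cbetween ?r a b d"
    using parity[of c] parity[of d] by simp
  then show False
    using assms(7) B1 B2 crosses_pair_iff[OF sub disj B1(2)] by simp
qed

lemma crossing_gap_bounded_comp:
  assumes "p \<in> S0" "q \<in> S0" "loc q = upc p" "comp p q \<in> P2nb"
    and "crossing_gap_bounded M p" "crossing_gap_bounded M q"
  shows "crossing_gap_bounded M (comp p q)"
proof (rule crossing_gap_boundedI)
  fix B1 B2 a c assume B: "B1 \<in> blks (comp p q)" "B2 \<in> blks (comp p q)" "crosses (comp p q) B1 B2"
    "a \<in> B1" "c \<in> B2"
  have P: "p \<in> P2nb" "q \<in> P2nb"
    using assms(1,2) S0_P2nb by blast+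
  have level: "comp_level p q v = level (comp p q) x" if "v \<in> comp_class p q (outer x)" for v x
    using comp_level_class[OF assms(1-3) that] .
  from comp_crossing_lifts[OF P assms(3,4) B]
  show "\<bar>level (comp p q) a - level (comp p q) c\<bar> < M"
    unfolding classes_cross_def
  proof (elim disjE bexE conjE)
    fix x y assume xy: "x \<in> blks p" "y \<in> blks p" "crosses p x y"
      "Inr ` x \<subseteq> comp_class p q (outer a)" "Inr ` y \<subseteq> comp_class p q (outer c)"
    obtain z z' where z: "z \<in> x" "z' \<in> y"
      using xy(1,2) wf_part_block_nonempty[OF P2nb_wf_part[OF P(1)]] by blast
    then have "level (comp p q) a = level p z" "level (comp p q) c = level p z'"
      using level[of "Inr z" a] level[of "Inr z'" c] xy(4,5) by (auto simp: comp_level_def)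
    then show ?thesis
      using crossing_gap_boundedD[OF assms(5) xy(1-3) z] by simp
  next
    fix x y assume xy: "x \<in> blks q" "y \<in> blks q" "crosses q x y"
      "Inl ` x \<subseteq> comp_class p q (outer a)" "Inl ` y \<subseteq> comp_class p q (outer c)"
    obtain z z' where z: "z \<in> x" "z' \<in> y"
      using xy(1,2) wf_part_block_nonempty[OF P2nb_wf_part[OF P(2)]] by blast
    then have "level (comp p q) a = level q z" "level (comp p q) c = level q z'"
      using level[of "Inl z" a] level[of "Inl z'" c] xy(4,5) by (auto simp: comp_level_def)
    then show ?thesis
      using crossing_gap_boundedD[OF assms(6) xy(1-3) z] by simp
  qed
qed

lemma is_category_crossing_gap_bounded:
  assumes "is_category C" "C \<subseteq> S0"
  shows "is_category {p \<in> C. crossing_gap_bounded M p}"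
proof -
  let ?C = "{p \<in> C. crossing_gap_bounded M p}"
  have P2nb: "p \<in> P2nb" if "p \<in> C" for p
    using that assms(2) S0_P2nb by blast
  have "tensor p q \<in> ?C" if "p \<in> ?C" "q \<in> ?C" for p q
    using that assms(1) P2nb crossing_gap_bounded_tensor by (simp add: is_category_def)
  moreover have "invol p \<in> ?C" if "p \<in> ?C" for p
    using that assms(1) P2nb P2nb_wf_part crossing_gap_bounded_invol by (simp add: is_category_def)
  moreover have "comp p q \<in> ?C" if "p \<in> ?C" "q \<in> ?C" "loc q = upc p" for p q
  proof -
    have "comp p q \<in> C"
      using that assms(1) by (simp add: is_category_def)
    then show ?thesis
      using that assms(2) P2nb crossing_gap_bounded_comp by blast
  qed
  moreover have "p \<in> ?C" if "p \<in> C" "blks p = {B}" for p B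
    using that crossing_gap_bounded_single_block by blast
  then have "idp White \<in> ?C" "idp Black \<in> ?C" "pairWB \<in> ?C" "pairBW \<in> ?C"
    using assms(1) by (auto simp: is_category_def idp_def pairWB_def pairBW_def)
  ultimately show ?thesis
    using assms(1) by (auto simp: is_category_def)
qed

lemma gen_cat_least: "is_category C \<Longrightarrow> G \<subseteq> C \<Longrightarrow> gen_cat G \<subseteq> C"
  unfolding gen_cat_def by blast

lemma gen_cat_superset: "G \<subseteq> gen_cat G"
  unfolding gen_cat_def by blast

lemma is_category_Inter:
  assumes "F \<noteq> {}" "\<And>C. C \<in> F \<Longrightarrow> is_category C"
  shows "is_category (\<Inter>F)"
  unfolding is_category_def
proof (intro conjI)
  obtain C where "C \<in> F"
    using assms(1) by blast
  then show "\<Inter>F \<subseteq> {p. wf_part p}"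
    using assms(2)[of C] unfolding is_category_def by blast
  show "\<forall>p\<in>\<Inter>F. \<forall>q\<in>\<Inter>F. tensor p q \<in> \<Inter>F" "\<forall>p\<in>\<Inter>F. invol p \<in> \<Inter>F"
    "\<forall>p\<in>\<Inter>F. \<forall>q\<in>\<Inter>F. loc q = upc p \<longrightarrow> comp p q \<in> \<Inter>F"
    "idp White \<in> \<Inter>F" "idp Black \<in> \<Inter>F" "pairWB \<in> \<Inter>F" "pairBW \<in> \<Inter>F"
    using assms(2) unfolding is_category_def by auto
qed

text \<open>If no category contains \<open>G\<close>, then \<open>gen_cat G\<close> is the intersection of nothing, \<open>UNIV\<close>.\<close>

lemma is_category_gen_cat:
  assumes "gen_cat G \<subseteq> {p. wf_part p}"
  shows "is_category (gen_cat G)"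
proof (cases "{C. is_category C \<and> G \<subseteq> C} = {}")
  case True
  then have "Part [] [] {{}} \<in> gen_cat G"
    unfolding gen_cat_def True by simp
  moreover have "\<not> wf_part (Part [] [] {{}})"
    by (simp add: wf_part_def partition_on_def)
  ultimately show ?thesis
    using assms by blast
next
  case False
  then show ?thesis
    unfolding gen_cat_def by (intro is_category_Inter) auto
qed

section \<open>Partitions on two hills\<close>

text \<open>The lower row \<open>\<circ>\<^sup>K \<bullet>\<^sup>K \<circ>\<^sup>K \<bullet>\<^sup>K\<close> is a walk with two hills of height \<open>K\<close>. Each level
  \<open>l < K\<close> is met at the four positions \<open>l, 2K-1-l, 2K+l, 4K-1-l\<close>; if \<open>h l\<close> they are paired
  within each hill, otherwise across the valley. A hill pair at level \<open>l\<close> crosses a valley-spanning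
  pair at level \<open>l'\<close> exactly if \<open>l < l'\<close>, and no other pairs cross.\<close>

definition hills_row :: "nat \<Rightarrow> color list" where
  "hills_row K = replicate K White @ replicate K Black @ replicate K White @ replicate K Black"

definition hills_level :: "nat \<Rightarrow> nat \<Rightarrow> nat" where
  "hills_level K j =
     (if j < K then j else if j < 2*K then 2*K-1-j else if j < 3*K then j-2*K else 4*K-1-j)"

definition pair_partner :: "bool \<Rightarrow> nat \<Rightarrow> nat \<Rightarrow> nat" where
  "pair_partner within_hill K j =
     (if within_hill then (if j < 2*K then 2*K-1-j else 6*K-1-j) else 4*K-1-j)"

definition hills_partner :: "(nat \<Rightarrow> bool) \<Rightarrow> nat \<Rightarrow> nat \<Rightarrow> nat" where
  "hills_partner h K j = pair_partner (h (hills_level K j)) K j"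

definition hills_partition :: "(nat \<Rightarrow> bool) \<Rightarrow> nat \<Rightarrow> part" where
  "hills_partition h K = Part [] (hills_row K) {{L j, L (hills_partner h K j)} | j. j < 4*K}"

lemma hills_level_less: "j < 4*K \<Longrightarrow> hills_level K j < K"
  by (auto simp: hills_level_def)

lemma pair_partner:
  assumes "j < 4*K"
  shows "pair_partner b K j < 4*K" "hills_level K (pair_partner b K j) = hills_level K j"
    "pair_partner b K (pair_partner b K j) = j" "pair_partner b K j \<noteq> j"
proof -
  show "pair_partner b K j < 4*K"
    using assms by (auto simp: pair_partner_def)
  show "hills_level K (pair_partner b K j) = hills_level K j"
    using assms by (cases b) (auto simp: pair_partner_def hills_level_def)
  show "pair_partner b K (pair_partner b K j) = j"
    using assms by (cases b) (auto simp: pair_partner_def)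
  show "pair_partner b K j \<noteq> j"
    using assms unfolding pair_partner_def by (cases b; cases "j < 2*K"; simp; presburger)
qed

lemma hills_partner:
  assumes "j < 4*K"
  shows "hills_partner h K j < 4*K" "hills_level K (hills_partner h K j) = hills_level K j"
    "hills_partner h K (hills_partner h K j) = j" "hills_partner h K j \<noteq> j"
  using pair_partner[OF assms, of "h (hills_level K j)"] by (simp_all add: hills_partner_def)

lemma partition_on_pairs:
  assumes "\<And>j. j < N \<Longrightarrow> s j < N \<and> s (s j) = j"
  shows "partition_on {L j | j. j < N} {{L j, L (s j)} | j. j < N}"
proof (rule partition_onI)
  show "\<Union>{{L j, L (s j)} | j. j < N} = {L j | j. j < N}"
  proof (rule set_eqI, rule iffI)
    fix x assume "x \<in> \<Union>{{L j, L (s j)} | j. j < N}"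
    then obtain j where "j < N" "x = L j \<or> x = L (s j)"
      by auto
    then show "x \<in> {L j | j. j < N}"
      using assms by auto
  next
    fix x assume "x \<in> {L j | j. j < N}"
    then obtain j where "j < N" "x = L j"
      by blast
    then have "x \<in> {L j, L (s j)}" "{L j, L (s j)} \<in> {{L j, L (s j)} | j. j < N}"
      by auto
    then show "x \<in> \<Union>{{L j, L (s j)} | j. j < N}"
      by (rule UnionI[rotated])
  qed
  show "{} \<notin> {{L j, L (s j)} | j. j < N}"
    by blast
  fix P Q assume "P \<in> {{L j, L (s j)} | j. j < N}" "Q \<in> {{L j, L (s j)} | j. j < N}" "P \<noteq> Q"
  then obtain i j where ij: "i < N" "P = {L i, L (s i)}" "j < N" "Q = {L j, L (s j)}"
    by blast
  have si: "s (s i) = i" and sj: "s (s j) = j"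
    using assms ij by auto
  have "P = Q" if "z \<in> P" "z \<in> Q" for z
  proof -
    from that ij have "i = j \<or> i = s j \<or> s i = j \<or> s i = s j"
      by auto
    then show "P = Q"
    proof (elim disjE)
      assume "i = s j"
      then show ?thesis using ij sj by auto
    next
      assume "s i = j"
      then show ?thesis using ij si by auto
    next
      assume "s i = s j"
      then have "i = j" using si sj by metis
      then show ?thesis using ij by simp
    qed (use ij in simp)
  qed
  with \<open>P \<noteq> Q\<close> show "disjnt P Q"
    by (auto simp: disjnt_def)
qed

lemma points_hills_partition: "points (hills_partition h K) = {L j | j. j < 4*K}"
  by (auto simp: points_def hills_partition_def hills_row_def)

lemma hills_partition_simps: "upc (hills_partition h K) = []" "loc (hills_partition h K) = hills_row K"
  "blks (hills_partition h K) = {{L j, L (hills_partner h K j)} | j. j < 4*K}"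
  by (simp_all add: hills_partition_def)

lemma wf_part_hills_partition: "wf_part (hills_partition h K)"
  unfolding wf_part_def points_hills_partition hills_partition_simps
  by (rule partition_on_pairs) (use hills_partner in blast)

lemma hills_partition_block:
  assumes "B \<in> blks (hills_partition h K)"
  obtains j where "j < 4*K" "B = {L j, L (hills_partner h K j)}"
  using assms unfolding hills_partition_simps by blast

lemma hills_row_nth:
  "j < 4*K \<Longrightarrow> hills_row K ! j = (if j < K \<or> (2*K \<le> j \<and> j < 3*K) then White else Black)"
  by (auto simp: hills_row_def nth_append)

definition hills_height :: "nat \<Rightarrow> nat \<Rightarrow> nat" where
  "hills_height K j = (if j \<le> K then j else if j \<le> 2*K then 2*K - j else if j \<le> 3*K then j - 2*K else 4*K - j)"

lemma row_height_hills_row: "j \<le> 4*K \<Longrightarrow> row_height (hills_row K) j = int (hills_height K j)"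
proof (induction j)
  case (Suc j)
  then have "row_height (hills_row K) (Suc j) = int (hills_height K j) + color_sign (hills_row K ! j)"
    by (simp add: row_height_def)
  also have "\<dots> = int (hills_height K (Suc j))"
    using Suc.prems by (simp add: hills_row_nth color_sign_def hills_height_def of_nat_diff)
  finally show ?case .
qed (simp add: row_height_def hills_height_def)

lemma level_hills_partition: "j < 4*K \<Longrightarrow> level (hills_partition h K) (L j) = int (hills_level K j)"
  by (simp add: hills_partition_simps row_level_def row_height_hills_row hills_height_def
      hills_level_def of_nat_diff)

lemma level_hills_partition_block:
  assumes "j < 4*K" "x \<in> {L j, L (hills_partner h K j)}"
  shows "level (hills_partition h K) x = int (hills_level K j)"
proof -
  from assms(2) have "x = L j \<or> x = L (hills_partner h K j)"
    by simp
  then show ?thesis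
    using level_hills_partition[OF assms(1)] level_hills_partition[OF hills_partner(1)[OF assms(1)]]
      hills_partner(2)[OF assms(1)] by auto
qed

lemma hills_row_partner_color:
  assumes "j < 4*K"
  shows "hills_row K ! hills_partner h K j \<noteq> hills_row K ! j"
proof -
  have "hills_row K ! pair_partner b K j \<noteq> hills_row K ! j" for b
    using assms pair_partner(1)[OF assms, of b]
    by (cases b) (auto simp: hills_row_nth pair_partner_def)
  then show ?thesis
    by (simp add: hills_partner_def)
qed

lemma hills_partition_P2nb: "hills_partition h K \<in> P2nb"
  unfolding P2nb_def
proof (intro CollectI conjI ballI)
  let ?p = "hills_partition h K" and ?s = "hills_partner h K"
  show "wf_part ?p"
    by (rule wf_part_hills_partition)
  fix B assume "B \<in> blks ?p"
  then obtain j where j: "j < 4*K" "B = {L j, L (?s j)}"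
    by (rule hills_partition_block)
  have colors: "hills_row K ! ?s j \<noteq> hills_row K ! j"
    using j(1) by (rule hills_row_partner_color)
  show "\<exists>x y. B = {x, y} \<and> ncol ?p x = White \<and> ncol ?p y = Black"
  proof (cases "hills_row K ! j")
    case White
    then have "hills_row K ! ?s j = Black"
      using colors by (cases "hills_row K ! ?s j") auto
    then show ?thesis
      using White j by (intro exI[of _ "L j"] exI[of _ "L (?s j)"]) (simp add: hills_partition_simps)
  next
    case Black
    then have "hills_row K ! ?s j = White"
      using colors by (cases "hills_row K ! ?s j") auto
    then show ?thesis
      using Black j by (intro exI[of _ "L (?s j)"] exI[of _ "L j"]) (auto simp: hills_partition_simps)
  qed
qed

lemma hills_partition_S0: "hills_partition h K \<in> S0"
  unfolding S0_def
proof (intro CollectI conjI ballI impI)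
  let ?p = "hills_partition h K" and ?s = "hills_partner h K"
  show P: "?p \<in> P2nb"
    by (rule hills_partition_P2nb)
  fix B a b assume B: "B \<in> blks ?p" "a \<in> B" "b \<in> B" "a \<noteq> b"
  obtain j where j: "j < 4*K" "B = {L j, L (?s j)}"
    using B(1) by (rule hills_partition_block)
  have pts: "a \<in> points ?p" "b \<in> points ?p"
    using B wf_part_block_subset[OF wf_part_hills_partition] by auto
  have "a = L j \<and> b = L (?s j) \<or> a = L (?s j) \<and> b = L j"
    using B j(2) by auto
  then have "ncol ?p a \<noteq> ncol ?p b"
    using hills_row_partner_color[OF j(1), of h] by (auto simp: hills_partition_simps)
  then have "sigma ?p (oint ?p a b) = level ?p b - level ?p a"
    using deltap_eq_level_diff[OF P pts] by (simp add: deltap_def)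
  also have "\<dots> = 0"
    using level_hills_partition_block[OF j(1), of a h] level_hills_partition_block[OF j(1), of b h]
      B(2,3) j(2) by simp
  finally show "sigma ?p (oint ?p a b) = 0" .
qed

text \<open>The crossing
  analysis is done over \<open>int\<close>, where \<open>2K-1-l\<close> and \<open>4K-1-l\<close> are honest differences.\<close>

definition level_pairs :: "bool \<Rightarrow> int \<Rightarrow> int \<Rightarrow> (int \<times> int) set" where
  "level_pairs h K l =
     (if h then {(l, 2*K-1-l), (2*K+l, 4*K-1-l)} else {(l, 4*K-1-l), (2*K-1-l, 2*K+l)})"

lemma level_pairs_cross:
  assumes "0 \<le> l" "l < K" "0 \<le> l'" "l' < K"
    and "(a, b) \<in> level_pairs h K l" "(c, d) \<in> level_pairs h' K l'" "h \<noteq> h' \<Longrightarrow> l \<noteq> l'"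
    and "between a b c \<noteq> between a b d"
  shows "h \<and> \<not> h' \<and> l < l' \<or> h' \<and> \<not> h \<and> l' < l"
  using assms unfolding level_pairs_def
  by (cases h; cases h'; simp; elim disjE; unfold between_def; auto)

lemma hills_partner_level_pair:
  assumes "j < 4*K"
  obtains a b where "(a, b) \<in> level_pairs (h (hills_level K j)) (int K) (int (hills_level K j))"
    "{a, b} = {int j, int (hills_partner h K j)}"
proof -
  have "(int j, int (hills_partner h K j)) \<in> level_pairs (h (hills_level K j)) (int K) (int (hills_level K j))
     \<or> (int (hills_partner h K j), int j) \<in> level_pairs (h (hills_level K j)) (int K) (int (hills_level K j))"
    using assms
    by (cases "h (hills_level K j)")
      (auto simp: level_pairs_def hills_partner_def pair_partner_def hills_level_def of_nat_diff)
  then show thesis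
    using that by (metis insert_commute)
qed

lemma hills_partition_crossing_levels:
  assumes "B \<in> blks (hills_partition h K)" "B' \<in> blks (hills_partition h K)" "crosses (hills_partition h K) B B'"
    and "j < 4*K" "B = {L j, L (hills_partner h K j)}"
    and "i < 4*K" "B' = {L i, L (hills_partner h K i)}"
  shows "h (hills_level K j) \<and> \<not> h (hills_level K i) \<and> hills_level K j < hills_level K i
       \<or> h (hills_level K i) \<and> \<not> h (hills_level K j) \<and> hills_level K i < hills_level K j"
proof -
  let ?p = "hills_partition h K" and ?s = "hills_partner h K" and ?l = "hills_level K"
  have sub: "{L j, L (?s j)} \<subseteq> points ?p" "{L i, L (?s i)} \<subseteq> points ?p"
    using assms(1,2,5,7) wf_part_block_subset[OF wf_part_hills_partition] by auto
  have disj: "{L j, L (?s j)} \<inter> {L i, L (?s i)} = {}"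
    using assms(1-3,5,7) wf_part_blocks_disjoint[OF wf_part_hills_partition] by (auto simp: crosses_def)
  have "L j \<noteq> L (?s j)"
    using hills_partner(4)[OF assms(4), of h] by auto
  then have crossing: "between j (?s j) i \<noteq> between j (?s j) (?s i)"
    using crosses_pair_iff[OF sub disj] assms(3,5,7) by simp
  obtain a b where ab: "(a, b) \<in> level_pairs (h (?l j)) (int K) (int (?l j))" "{a, b} = {int j, int (?s j)}"
    using assms(4) by (rule hills_partner_level_pair)
  obtain c d where cd: "(c, d) \<in> level_pairs (h (?l i)) (int K) (int (?l i))" "{c, d} = {int i, int (?s i)}"
    using assms(6) by (rule hills_partner_level_pair)
  have "between a b x = between (int j) (int (?s j)) x" for x
    using ab(2) by (metis between_commute doubleton_eq_iff)
  moreover have "between (int x) (int y) (int z) = between x y z" for x y z :: nat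
    by (simp add: between_def)
  ultimately have between: "between a b c \<noteq> between a b d"
    using crossing cd(2) by (metis doubleton_eq_iff)
  have "int (?l j) < int K" "int (?l i) < int K"
    using hills_level_less assms(4,6) by simp_all
  moreover have "h (?l j) \<noteq> h (?l i) \<Longrightarrow> int (?l j) \<noteq> int (?l i)"
    by auto
  ultimately show ?thesis
    using level_pairs_cross[OF _ _ _ _ ab(1) cd(1) _ between] by simp
qed

lemma semigroup_gap:
  fixes D :: "nat set"
  assumes "\<forall>x\<in>D. \<forall>y\<in>D. x + y \<in> D" "l = 0 \<or> l \<in> D" "l' \<notin> D" "l < l'"
  shows "l' - l \<notin> D"
proof
  assume gap: "l' - l \<in> D"
  have "l + (l' - l) \<in> D"
  proof (cases "l = 0")
    case True
    then show ?thesis using gap by simp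
  next
    case False
    then show ?thesis using assms(1,2) gap by blast
  qed
  with assms(3,4) show False
    by simp
qed

lemma hills_partition_in_I_D:
  assumes "\<forall>x\<in>D. \<forall>y\<in>D. x + y \<in> D"
  shows "hills_partition (\<lambda>l. l = 0 \<or> l \<in> D) K \<in> I_D D"
  unfolding I_D_def
proof (intro CollectI conjI ballI impI)
  let ?h = "\<lambda>l. l = 0 \<or> l \<in> D" and ?l = "hills_level K"
  let ?p = "hills_partition ?h K"
  show S0: "?p \<in> S0"
    by (rule hills_partition_S0)
  fix B B' assume B: "B \<in> blks ?p" "B' \<in> blks ?p" "crosses ?p B B'"
  obtain j where j: "j < 4*K" "B = {L j, L (hills_partner ?h K j)}"
    using B(1) by (rule hills_partition_block)
  obtain i where i: "i < 4*K" "B' = {L i, L (hills_partner ?h K i)}"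
    using B(2) by (rule hills_partition_block)
  have "dp ?p B B' = nat \<bar>int (?l i) - int (?l j)\<bar>"
    using S0_dp_eq_level_diff[OF S0 B(1,2), of "L j" "L i"] j i level_hills_partition by simp
  moreover have "?h (?l j) \<and> \<not> ?h (?l i) \<and> ?l j < ?l i \<or> ?h (?l i) \<and> \<not> ?h (?l j) \<and> ?l i < ?l j"
    using hills_partition_crossing_levels[OF B j i] .
  ultimately show "dp ?p B B' \<notin> D"
    using semigroup_gap[OF assms, of "?l j" "?l i"] semigroup_gap[OF assms, of "?l i" "?l j"]
    by (auto simp: nat_diff_distrib)
qed

lemma hills_partition_not_crossing_gap_bounded:
  assumes "k \<ge> 1" "k \<notin> D" "M \<le> int k"
  shows "\<not> crossing_gap_bounded M (hills_partition (\<lambda>l. l = 0 \<or> l \<in> D) (Suc k))"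
proof
  let ?h = "\<lambda>l. l = 0 \<or> l \<in> D" and ?K = "Suc k"
  let ?p = "hills_partition ?h ?K"
  assume "crossing_gap_bounded M ?p"
  then have bounded: "crossing_gap_bounded (int k) ?p"
    using assms(3) by (rule crossing_gap_bounded_mono)
  have "hills_partner ?h ?K 0 = 2 * ?K - 1" "hills_partner ?h ?K k = 4 * ?K - 1 - k"
    using assms by (simp_all add: hills_partner_def pair_partner_def hills_level_def)
  then have blocks: "{L 0, L (2 * ?K - 1)} \<in> blks ?p" "{L k, L (4 * ?K - 1 - k)} \<in> blks ?p"
    unfolding hills_partition_simps by (intro CollectI exI[of _ 0] exI[of _ k]; simp)+
  have "crosses ?p {L 0, L (2 * ?K - 1)} {L k, L (4 * ?K - 1 - k)}"
    using assms(1) by (subst crosses_pair_iff) (auto simp: points_hills_partition between_def)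
  moreover have "level ?p (L 0) = 0" "level ?p (L k) = int k"
    using level_hills_partition[of 0 ?K ?h] level_hills_partition[of k ?K ?h] by (simp_all add: hills_level_def)
  ultimately show False
    using crossing_gap_boundedD[OF bounded blocks] by fastforce
qed

lemma I_D_unbounded_crossing_gap:
  assumes "\<forall>x\<in>D. \<forall>y\<in>D. x + y \<in> D" "infinite ({n. n \<ge> 1} - D)"
  shows "\<exists>p\<in>I_D D. \<not> crossing_gap_bounded M p"
proof -
  have "\<not> (\<forall>n \<in> {n. n \<ge> 1} - D. n < Suc (nat M))"
    using assms(2) finite_nat_set_iff_bounded by blast
  then obtain k where k: "k \<ge> 1" "k \<notin> D" "nat M < k"
    by (auto simp: not_less_eq)
  then have "M \<le> int k"
    by arith
  with k show ?thesis
    using hills_partition_in_I_D[OF assms(1)] hills_partition_not_crossing_gap_bounded by blast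
qed

theorem corollary8p4:
  fixes D :: "nat set"
  assumes "\<forall>x\<in>D. \<forall>y\<in>D. x + y \<in> D"
    and "infinite ({n. n \<ge> 1} - D)"
    and "gen_cat G = I_D D"
  shows "infinite G"
proof
  assume "finite G"
  have cat: "is_category (I_D D)"
    using is_category_gen_cat[of G] I_D_subset_wf_part unfolding assms(3) by blast
  have G: "G \<subseteq> I_D D"
    using gen_cat_superset[of G] unfolding assms(3) .
  then obtain M where "\<forall>p\<in>G. crossing_gap_bounded M p"
    using finite_crossing_gap_bounded[OF \<open>finite G\<close>] I_D_subset_wf_part by blast
  with G have "G \<subseteq> {p \<in> I_D D. crossing_gap_bounded M p}"
    by blast
  then have "gen_cat G \<subseteq> {p \<in> I_D D. crossing_gap_bounded M p}"
    by (rule gen_cat_least[OF is_category_crossing_gap_bounded[OF cat I_D_subset_S0]])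
  moreover obtain p where "p \<in> I_D D" "\<not> crossing_gap_bounded M p"
    using I_D_unbounded_crossing_gap[OF assms(1,2)] by blast
  ultimately show False
    unfolding assms(3) by blast
qed

end
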